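(* Assume (H1). Then: (i) for every $p\ge1$ there is a constant $C_p$ such that $E[|I_t^T-I_s^T|^p]\le C_p|t-s|^{p/2}$ for all $t,s,T\in[0,1]$; (ii)–(iv) there is a constant $C$ such that for every $d$, every grid $0=T_0<\dots<T_d\le 1$, every $\xi\in\Theta$, $t,s\in[0,1]$ and $\alpha,\beta\in\{1,\dots,q\}$: $E[|\hat\sigma_t(\xi)-\hat\sigma_s(\xi)|^2]\le Cd|t-s|$, $E[|\partial_\alpha\hat\sigma_t(\xi)-\partial_\alpha\hat\sigma_s(\xi)|^2]\le Cd|t-s|$, and $E[|\partial_\alpha\partial_\beta\hat\sigma_t(\xi)-\partial_\alpha\partial_\beta\hat\sigma_s(\xi)|^2]\le Cd|t-s|$.
   Context: Let $q\ge1$ and let $\Theta\subset\mathbb{R}^q$ be compact and convex; $\partial_\alpha$ denotes $\partial/\partial\xi_\alpha$. Let $(\Omega,\mathscr F,(\mathscr F_t)_{t\in[0,1]},P)$ be a filtered probability space carrying a one-dimensional $(\mathscr F_t)$-standard Brownian motion $W$. Let $k:\Theta\times[0,1]\to\mathbb{R}$ be a kernel, extended by $k(\xi,t)=0$ for $t<0$. Fix $\theta\in\Theta$ and a deterministic, continuous, strictly positive function $u\mapsto V_0^u$ on $[0,1]$. For $0\le t\le u\le1$ set $V_t^u=V_0^u\exp\big(\int_0^t k(\theta,u-s)\,dW_s-\tfrac12\int_0^t k(\theta,u-s)^2ds\big)$, $V_t^u=0$ for $t>u$. For $0\le t<T\le 1$ let $I_t^T=\int_t^T V_t^u\,du$,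 and $I_t^T=0$ for $t\ge T$. Given a grid $0=T_0<T_1<\dots<T_d\le1$, put $\hat\sigma_t^j(\xi)=\sum_{l=1}^j k(\xi,T_l-t)(I_t^{T_l}-I_t^{T_{l-1}})$ and $\hat\sigma_t(\xi)=(\hat\sigma^1_t(\xi),\dots,\hat\sigma^d_t(\xi))\in\mathbb{R}^d$; $|\cdot|$ is the Euclidean norm. Hypothesis (H1): $k\in C^{2,2}(\Theta\times[0,1])$ and $k>0$ on $\Theta\times[0,1]$. *)

theory Defs
  imports "HOL-Probability.Probability"
begin

definition std_BM :: "'a measure \<Rightarrow> (real \<Rightarrow> 'a measure) \<Rightarrow> (real \<Rightarrow> 'a \<Rightarrow> real) \<Rightarrow> bool" where
  "std_BM M F W \<longleftrightarrow>
     prob_space M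
   \<and> (\<forall>t\<in>{0..1}. subalgebra M (F t))
   \<and> (\<forall>s t. 0 \<le> s \<longrightarrow> s \<le> t \<longrightarrow> t \<le> 1 \<longrightarrow> sets (F s) \<subseteq> sets (F t))
   \<and> (\<forall>t\<in>{0..1}. W t \<in> borel_measurable (F t))
   \<and> (\<forall>\<omega>\<in>space M. W 0 \<omega> = 0 \<and> continuous_on {0..1} (\<lambda>t. W t \<omega>))
   \<and> (\<forall>s t. 0 \<le> s \<longrightarrow> s < t \<longrightarrow> t \<le> 1 \<longrightarrow>
        distributed M lborel (\<lambda>\<omega>. W t \<omega> - W s \<omega>) (\<lambda>x. ennreal (normal_density 0 (sqrt (t - s)) x))
      \<and> prob_space.indep_set M (sets (F s))
           (sets (vimage_algebra (space M) (\<lambda>\<omega>. W t \<omega> - W s \<omega>) borel)))"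

text \<open>Limit of left-point Riemann sums along uniform partitions of [0,t]; for continuous
  paths and a C1 deterministic integrand this limit exists pathwise and is a version of the
  Ito integral.\<close>
definition ito_det :: "(real \<Rightarrow> real) \<Rightarrow> (real \<Rightarrow> 'a \<Rightarrow> real) \<Rightarrow> real \<Rightarrow> 'a \<Rightarrow> real" where
  "ito_det f W t \<omega> = lim (\<lambda>n. \<Sum>i<n. f (t * real i / real n) *
        (W (t * real (Suc i) / real n) \<omega> - W (t * real i / real n) \<omega>))"

definition kext :: "('q \<Rightarrow> real \<Rightarrow> real) \<Rightarrow> 'q \<Rightarrow> real \<Rightarrow> real" where
  "kext k \<xi> t = (if t < 0 then 0 else k \<xi> t)"

definition pdir :: "'q::finite \<Rightarrow> (real^'q \<Rightarrow> real) \<Rightarrow> real^'q \<Rightarrow> real" where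
  "pdir \<alpha> g \<xi> = deriv (\<lambda>h. g (\<xi> + h *\<^sub>R axis \<alpha> 1)) 0"

definition pd_xi :: "'q::finite \<Rightarrow> (real^'q \<Rightarrow> real \<Rightarrow> real) \<Rightarrow> real^'q \<Rightarrow> real \<Rightarrow> real" where
  "pd_xi \<alpha> f \<xi> t = pdir \<alpha> (\<lambda>x. f x t) \<xi>"

definition pd_t :: "('q \<Rightarrow> real \<Rightarrow> real) \<Rightarrow> 'q \<Rightarrow> real \<Rightarrow> real" where
  "pd_t f \<xi> t = deriv (f \<xi>) t"

text \<open>k is C^{2,2}: all derivatives of order at most 2 in xi and at most 2 in t exist and are
  continuous on the open set U.\<close>
definition C22_on :: "((real^'q::finite) \<times> real) set \<Rightarrow> (real^'q \<Rightarrow> real \<Rightarrow> real) \<Rightarrow> bool" where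
  "C22_on U k \<longleftrightarrow>
     (\<forall>g \<in> {k} \<union> {pd_xi \<alpha> k | \<alpha>. True}. \<forall>(\<xi>,t)\<in>U. \<forall>\<gamma>.
        (\<lambda>h. g (\<xi> + h *\<^sub>R axis \<gamma> 1) t) differentiable (at 0))
   \<and> (\<forall>g \<in> {k} \<union> {pd_xi \<alpha> k | \<alpha>. True} \<union> {pd_xi \<beta> (pd_xi \<alpha> k) | \<alpha> \<beta>. True}.
        (\<forall>(\<xi>,t)\<in>U. g \<xi> differentiable (at t) \<and> pd_t g \<xi> differentiable (at t))
      \<and> continuous_on U (\<lambda>(\<xi>,t). g \<xi> t)
      \<and> continuous_on U (\<lambda>(\<xi>,t). pd_t g \<xi> t)
      \<and> continuous_on U (\<lambda>(\<xi>,t). pd_t (pd_t g) \<xi> t))"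

definition H1 :: "(real^'q::finite) set \<Rightarrow> (real^'q \<Rightarrow> real \<Rightarrow> real) \<Rightarrow> bool" where
  "H1 \<Theta> k \<longleftrightarrow> (\<exists>U. open U \<and> \<Theta> \<times> {0..1} \<subseteq> U \<and> C22_on U k)
                \<and> (\<forall>\<xi>\<in>\<Theta>. \<forall>t\<in>{0..1}. k \<xi> t > 0)"

definition Vproc :: "('q \<Rightarrow> real \<Rightarrow> real) \<Rightarrow> 'q \<Rightarrow> (real \<Rightarrow> real) \<Rightarrow> (real \<Rightarrow> 'a \<Rightarrow> real)
                     \<Rightarrow> real \<Rightarrow> real \<Rightarrow> 'a \<Rightarrow> real" where
  "Vproc k \<theta> V0 W t u \<omega> =
     (if t \<le> u then V0 u * exp (ito_det (\<lambda>s. kext k \<theta> (u - s)) W t \<omega>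
                               - 1/2 * integral {0..t} (\<lambda>s. (kext k \<theta> (u - s))\<^sup>2))
      else 0)"

definition Iproc :: "('q \<Rightarrow> real \<Rightarrow> real) \<Rightarrow> 'q \<Rightarrow> (real \<Rightarrow> real) \<Rightarrow> (real \<Rightarrow> 'a \<Rightarrow> real)
                     \<Rightarrow> real \<Rightarrow> real \<Rightarrow> 'a \<Rightarrow> real" where
  "Iproc k \<theta> V0 W t T \<omega> = (if t < T then integral {t..T} (\<lambda>u. Vproc k \<theta> V0 W t u \<omega>) else 0)"

definition sigma_hat :: "('q \<Rightarrow> real \<Rightarrow> real) \<Rightarrow> 'q \<Rightarrow> (real \<Rightarrow> real) \<Rightarrow> (real \<Rightarrow> 'a \<Rightarrow> real)
                     \<Rightarrow> (nat \<Rightarrow> real) \<Rightarrow> nat \<Rightarrow> 'q \<Rightarrow> real \<Rightarrow> 'a \<Rightarrow> real" where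
  "sigma_hat k \<theta> V0 W Tg j \<xi> t \<omega> =
     (\<Sum>l\<in>{1..j}. kext k \<xi> (Tg l - t) *
        (Iproc k \<theta> V0 W t (Tg l) \<omega> - Iproc k \<theta> V0 W t (Tg (l - 1)) \<omega>))"

definition grid :: "nat \<Rightarrow> (nat \<Rightarrow> real) \<Rightarrow> bool" where
  "grid d Tg \<longleftrightarrow> Tg 0 = 0 \<and> (\<forall>l<d. Tg l < Tg (Suc l)) \<and> Tg d \<le> 1"

end

(*
  The forward variance is V_t^u = V_0^u exp(J_t^u - A_t^u / 2), where J_t^u is the Wiener integral
  of r |-> k(theta, u - r) over [0, t], made pathwise by integration by parts. Its Riemann-Stieltjes
  sums are Gaussian with variance at most K^2 t, so J is sub-Gaussian: all moments of V_t^u are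
  bounded, and since V_t^u = V_s^u exp(J_t^u - J_s^u - delta) with a Gaussian exponent of variance
  O(t - s), Young's inequality gives E (V_t^u - V_s^u)^(2m) <= C (t - s)^m. Jensen's inequality on
  Riemann sums and Fatou's lemma carry these bounds over to integrals in u. This yields (i), and the
  same estimate for the terms phi(b - t) (I_t^b - I_t^a) of sigma-hat, for any bounded Lipschitz
  weight phi. The xi-derivatives of sigma-hat are sums of the same shape with phi a first or second
  xi-derivative of k(xi, .), which are uniformly bounded and Lipschitz by (H1) and compactness.
  Summing over the grid cells with weights (T_l - T_(l-1)) sqrt(t - s) + |[T_(l-1), T_l] /\ [s, t]|,
  whose total is at most 2 sqrt(t - s), makes each component independent of the grid; summing the
  d components gives the factor d.
*)
theory Submission
  imports Defs
begin

section \<open>Riemann and Riemann-Stieltjes sums on uniform partitions\<close>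

definition unif_pt :: "real \<Rightarrow> real \<Rightarrow> nat \<Rightarrow> nat \<Rightarrow> real" where
  "unif_pt a b n i = a + (b - a) * real i / real n"

lemma unif_pt_0 [simp]: "unif_pt a b n 0 = a"
  unfolding unif_pt_def by simp

lemma unif_pt_last [simp]: "n > 0 \<Longrightarrow> unif_pt a b n n = b"
  unfolding unif_pt_def by simp

lemma unif_pt_Suc_diff: "n > 0 \<Longrightarrow> unif_pt a b n (Suc i) - unif_pt a b n i = (b - a) / real n"
  unfolding unif_pt_def by (simp add: field_simps)

lemma unif_pt_mono: "a \<le> b \<Longrightarrow> unif_pt a b n i \<le> unif_pt a b n (Suc i)"
  unfolding unif_pt_def by (cases "n = 0") (auto simp: divide_right_mono mult_left_mono)

lemma unif_pt_in_Icc: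
  assumes "a \<le> b" "i \<le> n"
  shows "unif_pt a b n i \<in> {a..b}"
proof (cases "n = 0")
  case False
  then have "(b - a) * real i / real n \<le> b - a"
    using assms by (simp add: divide_le_eq mult_left_mono)
  then show ?thesis
    using assms unfolding unif_pt_def by auto
qed (use assms in \<open>simp add: unif_pt_def\<close>)

lemma unif_pt_cell_subset:
  "a \<le> b \<Longrightarrow> i < n \<Longrightarrow> {unif_pt a b n i..unif_pt a b n (Suc i)} \<subseteq> {a..b}"
  using unif_pt_in_Icc[of a b i n] unif_pt_in_Icc[of a b "Suc i" n] by auto

lemma chain_le:
  fixes x :: "nat \<Rightarrow> 'a::preorder"
  assumes "\<And>i. i < n \<Longrightarrow> x i \<le> x (Suc i)" "j \<le> k" "k \<le> n"
  shows "x j \<le> x k"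
  using assms
proof (induction k)
  case (Suc k)
  then show ?case by (cases "j = Suc k") (auto intro: order_trans)
qed simp

lemma integral_chain_sum:
  fixes x :: "nat \<Rightarrow> real" and f :: "real \<Rightarrow> real"
  assumes "\<And>i. i < n \<Longrightarrow> x i \<le> x (Suc i)" "continuous_on {x 0..x n} f"
  shows "integral {x 0..x n} f = (\<Sum>i<n. integral {x i..x (Suc i)} f)"
  using assms
proof (induction n)
  case (Suc n)
  have le: "x 0 \<le> x n" "x n \<le> x (Suc n)"
    using chain_le[of "Suc n" x 0 n] Suc.prems by auto
  have "continuous_on {x 0..x n} f"
    by (rule continuous_on_subset[OF Suc.prems(2)]) (use le in auto)
  then have "integral {x 0..x n} f = (\<Sum>i<n. integral {x i..x (Suc i)} f)"
    using Suc by simp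
  moreover have "integral {x 0..x n} f + integral {x n..x (Suc n)} f = integral {x 0..x (Suc n)} f"
    using Henstock_Kurzweil_Integration.integral_combine[OF le integrable_continuous_real[OF Suc.prems(2)]] .
  ultimately show ?case
    by simp
qed simp

lemma tagged_sum_integral_error:
  fixes g h :: "real \<Rightarrow> real"
  assumes ab: "a \<le> b" and n: "n > 0"
    and cg: "continuous_on {a..b} g" and ch: "continuous_on {a..b} h"
    and B: "\<And>r. r \<in> {a..b} \<Longrightarrow> \<bar>h r\<bar> \<le> B"
    and osc: "\<And>i r. i < n \<Longrightarrow> r \<in> {unif_pt a b n i..unif_pt a b n (Suc i)} \<Longrightarrow> \<bar>g (y i) - g r\<bar> \<le> e"
  shows "\<bar>(\<Sum>i<n. g (y i) * integral {unif_pt a b n i..unif_pt a b n (Suc i)} h)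
            - integral {a..b} (\<lambda>r. g r * h r)\<bar> \<le> e * B * (b - a)"
proof -
  let ?x = "unif_pt a b n"
  let ?I = "\<lambda>i. {?x i..?x (Suc i)}"
  have cgh: "continuous_on {a..b} (\<lambda>r. g r * h r)"
    by (intro continuous_intros cg ch)
  have cell: "\<And>i. i < n \<Longrightarrow> ?I i \<subseteq> {a..b}"
    using unif_pt_cell_subset[OF ab] .
  have "integral {a..b} (\<lambda>r. g r * h r) = (\<Sum>i<n. integral (?I i) (\<lambda>r. g r * h r))"
    using integral_chain_sum[of n ?x] unif_pt_mono[OF ab] cgh n by simp
  moreover have "g (y i) * integral (?I i) h - integral (?I i) (\<lambda>r. g r * h r)
      = integral (?I i) (\<lambda>r. (g (y i) - g r) * h r)" if "i < n" for i
  proof -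
    have "h integrable_on ?I i" "(\<lambda>r. g r * h r) integrable_on ?I i"
      using integrable_continuous_real[OF continuous_on_subset[OF ch cell[OF that]]]
        integrable_continuous_real[OF continuous_on_subset[OF cgh cell[OF that]]] .
    then show ?thesis
      by (simp add: left_diff_distrib integral_diff integrable_on_mult_right)
  qed
  ultimately have diff: "(\<Sum>i<n. g (y i) * integral (?I i) h) - integral {a..b} (\<lambda>r. g r * h r)
      = (\<Sum>i<n. integral (?I i) (\<lambda>r. (g (y i) - g r) * h r))"
    by (simp add: sum_subtractf[symmetric])
  have "\<bar>integral (?I i) (\<lambda>r. (g (y i) - g r) * h r)\<bar> \<le> e * B * (?x (Suc i) - ?x i)" if i: "i < n" for i
    unfolding real_norm_def[symmetric]
  proof (rule integral_bound[OF unif_pt_mono[OF ab]])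
    show "continuous_on (?I i) (\<lambda>r. (g (y i) - g r) * h r)"
      using cell[OF i] by (intro continuous_intros continuous_on_subset[OF cg] continuous_on_subset[OF ch])
    show "norm ((g (y i) - g r) * h r) \<le> e * B" if "r \<in> ?I i" for r
      using osc[OF i that] B[of r] cell[OF i] that
      by (auto simp: abs_mult intro!: mult_mono' order_trans[OF abs_ge_zero osc[OF i that]])
  qed
  then have "\<bar>\<Sum>i<n. integral (?I i) (\<lambda>r. (g (y i) - g r) * h r)\<bar> \<le> (\<Sum>i<n. e * B * (?x (Suc i) - ?x i))"
    by (intro order_trans[OF sum_abs] sum_mono) auto
  also have "\<dots> = e * B * (b - a)"
    using n by (simp add: sum_distrib_left[symmetric] sum_lessThan_telescope)
  finally show ?thesis
    unfolding diff .
qed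

lemma tagged_sum_tendsto_integral:
  fixes g h :: "real \<Rightarrow> real"
  assumes ab: "a \<le> b" and cg: "continuous_on {a..b} g" and ch: "continuous_on {a..b} h"
    and y: "\<And>n i. i < n \<Longrightarrow> y n i \<in> {unif_pt a b n i..unif_pt a b n (Suc i)}"
  shows "(\<lambda>n. \<Sum>i<n. g (y n i) * integral {unif_pt a b n i..unif_pt a b n (Suc i)} h)
           \<longlonglongrightarrow> integral {a..b} (\<lambda>r. g r * h r)"
proof (rule LIMSEQ_I)
  fix e :: real
  assume e: "0 < e"
  obtain B where B: "\<And>r. r \<in> {a..b} \<Longrightarrow> \<bar>h r\<bar> \<le> B"
    using compact_imp_bounded[OF compact_continuous_image[OF ch compact_Icc]]
    unfolding bounded_iff by fastforce
  have B0: "0 \<le> B"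
    using B[of a] ab by auto
  define e' where "e' = e / ((b - a) * B + 1)"
  have e': "0 < e'"
    unfolding e'_def using e ab B0 by (auto intro!: divide_pos_pos add_nonneg_pos)
  obtain d where d: "d > 0"
    and dd: "\<And>x x'. x \<in> {a..b} \<Longrightarrow> x' \<in> {a..b} \<Longrightarrow> dist x' x < d \<Longrightarrow> dist (g x') (g x) < e'"
    using compact_uniformly_continuous[OF cg compact_Icc] e' unfolding uniformly_continuous_on_def by metis
  obtain N :: nat where N: "(b - a) / d < real N"
    using reals_Archimedean2 by blast
  have "0 \<le> (b - a) / d"
    using ab d by simp
  then have N0: "N > 0"
    using N by (cases N) auto
  show "\<exists>no. \<forall>n\<ge>no. norm ((\<Sum>i<n. g (y n i) * integral {unif_pt a b n i..unif_pt a b n (Suc i)} h)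
           - integral {a..b} (\<lambda>r. g r * h r)) < e"
  proof (intro exI allI impI)
    fix n
    assume nN: "N \<le> n"
    then have n0: "n > 0"
      using N0 by linarith
    have "(b - a) / real n \<le> (b - a) / real N"
      using nN N0 ab by (intro divide_left_mono) auto
    also have "\<dots> < d"
      using N d N0 by (simp add: divide_less_eq mult.commute)
    finally have mesh: "(b - a) / real n < d" .
    have osc: "\<bar>g (y n i) - g r\<bar> \<le> e'"
      if i: "i < n" and r: "r \<in> {unif_pt a b n i..unif_pt a b n (Suc i)}" for i r
    proof -
      have "dist (y n i) r \<le> unif_pt a b n (Suc i) - unif_pt a b n i"
        using r y[OF i] by (auto simp: dist_real_def)
      then have "dist (y n i) r < d"
        using mesh unif_pt_Suc_diff[OF n0] by simp
      then show ?thesis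
        using dd[of r "y n i"] r y[OF i] unif_pt_cell_subset[OF ab i] by (force simp: dist_real_def)
    qed
    have "0 \<le> (b - a) * B"
      using ab B0 by simp
    then have "(b - a) * B / ((b - a) * B + 1) < 1"
      by (simp add: divide_less_eq)
    then have "e * ((b - a) * B / ((b - a) * B + 1)) < e * 1"
      by (rule mult_strict_left_mono[OF _ e])
    moreover have "e' * B * (b - a) = e * ((b - a) * B / ((b - a) * B + 1))"
      unfolding e'_def by (simp add: mult_ac)
    ultimately have "e' * B * (b - a) < e"
      by simp
    then show "norm ((\<Sum>i<n. g (y n i) * integral {unif_pt a b n i..unif_pt a b n (Suc i)} h)
           - integral {a..b} (\<lambda>r. g r * h r)) < e"
      using tagged_sum_integral_error[where y = "y n", OF ab n0 cg ch B osc] by simp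
  qed
qed

lemma riemann_sum_tendsto_integral:
  fixes g :: "real \<Rightarrow> real"
  assumes ab: "a \<le> b" and cg: "continuous_on {a..b} g"
  shows "(\<lambda>n. \<Sum>i<n. g (unif_pt a b n i) * ((b - a) / real n)) \<longlonglongrightarrow> integral {a..b} g"
proof -
  have "(\<lambda>n. \<Sum>i<n. g (unif_pt a b n i) * integral {unif_pt a b n i..unif_pt a b n (Suc i)} (\<lambda>_. 1))
           \<longlonglongrightarrow> integral {a..b} (\<lambda>r. g r * 1)"
    by (rule tagged_sum_tendsto_integral[OF ab cg]) (auto intro: unif_pt_mono[OF ab])
  moreover have "integral {unif_pt a b n i..unif_pt a b n (Suc i)} (\<lambda>_. 1) = (b - a) / real n"
    if "i < n" for n i
    using unif_pt_mono[OF ab, of n i] unif_pt_Suc_diff[of n a b i] that by simp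
  ultimately show ?thesis
    by simp
qed

lemma sum_lessThan_by_parts:
  fixes f w :: "nat \<Rightarrow> real"
  shows "(\<Sum>i<n. f i * (w (Suc i) - w i))
     = f n * w n - f 0 * w 0 - (\<Sum>i<n. w (Suc i) * (f (Suc i) - f i))"
  by (induction n) (auto simp: algebra_simps)

lemma stieltjes_sum_tendsto_by_parts:
  fixes f f' w :: "real \<Rightarrow> real"
  assumes ab: "a \<le> b"
    and f': "\<And>x. x \<in> {a..b} \<Longrightarrow> (f has_real_derivative f' x) (at x within {a..b})"
    and cf': "continuous_on {a..b} f'" and cw: "continuous_on {a..b} w"
  shows "(\<lambda>n. \<Sum>i<n. f (unif_pt a b n i) * (w (unif_pt a b n (Suc i)) - w (unif_pt a b n i)))
           \<longlonglongrightarrow> f b * w b - f a * w a - integral {a..b} (\<lambda>r. w r * f' r)"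
proof -
  let ?x = "\<lambda>n. unif_pt a b n"
  have ftc: "integral {?x n i..?x n (Suc i)} f' = f (?x n (Suc i)) - f (?x n i)" if "i < n" for n i
  proof (rule integral_unique, rule fundamental_theorem_of_calculus[OF unif_pt_mono[OF ab]])
    show "(f has_vector_derivative f' r) (at r within {?x n i..?x n (Suc i)})"
      if "r \<in> {?x n i..?x n (Suc i)}" for r
      using DERIV_subset[OF f'[of r] unif_pt_cell_subset[OF ab \<open>i < n\<close>]]
        unif_pt_cell_subset[OF ab \<open>i < n\<close>] that
      by (auto simp: has_real_derivative_iff_has_vector_derivative[symmetric])
  qed
  have "(\<lambda>n. \<Sum>i<n. w (?x n (Suc i)) * integral {?x n i..?x n (Suc i)} f')
           \<longlonglongrightarrow> integral {a..b} (\<lambda>r. w r * f' r)"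
    by (rule tagged_sum_tendsto_integral[OF ab cw cf']) (auto intro: unif_pt_mono[OF ab])
  moreover have "\<forall>\<^sub>F n in sequentially.
      f b * w b - f a * w a - (\<Sum>i<n. w (?x n (Suc i)) * integral {?x n i..?x n (Suc i)} f')
      = (\<Sum>i<n. f (?x n i) * (w (?x n (Suc i)) - w (?x n i)))"
  proof (rule eventually_sequentiallyI[of 1])
    fix n :: nat
    assume "1 \<le> n"
    then show "f b * w b - f a * w a - (\<Sum>i<n. w (?x n (Suc i)) * integral {?x n i..?x n (Suc i)} f')
      = (\<Sum>i<n. f (?x n i) * (w (?x n (Suc i)) - w (?x n i)))"
      using sum_lessThan_by_parts[of "\<lambda>i. f (?x n i)" "\<lambda>i. w (?x n i)" n] ftc by simp
  qed
  ultimately show ?thesis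
    by (rule Lim_transform_eventually[OF tendsto_diff[OF tendsto_const]])
qed

lemma abs_exp_minus_one_le: "\<bar>exp y - 1\<bar> \<le> \<bar>y\<bar> * exp \<bar>y\<bar>" for y :: real
proof (cases "0 \<le> y")
  case True
  have "exp y * (1 - y) \<le> exp y * exp (- y)"
    using exp_ge_add_one_self[of "- y"] by (intro mult_left_mono) auto
  then show ?thesis
    using True by (simp add: exp_minus field_simps)
next
  case False
  have "- y \<le> - y * exp (- y)"
    using False by (simp add: mult_le_cancel_left1)
  moreover have "\<bar>exp y - 1\<bar> = 1 - exp y" "\<bar>y\<bar> = - y"
    using False by auto
  ultimately show ?thesis
    using exp_ge_add_one_self[of y] by (simp only:)
qed

lemma power_le_exp:
  assumes "0 \<le> x"
  shows "x ^ N \<le> real N ^ N * exp x"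
proof (cases "N = 0")
  case False
  have "x / real N \<le> exp (x / real N)"
    using exp_ge_add_one_self[of "x / real N"] by linarith
  then have "x \<le> real N * exp (x / real N)"
    using False by (simp add: divide_le_eq mult.commute)
  then have "x ^ N \<le> (real N * exp (x / real N)) ^ N"
    using assms by (intro power_mono) auto
  also have "\<dots> = real N ^ N * exp x"
    using False by (simp add: power_mult_distrib exp_of_nat_mult[symmetric])
  finally show ?thesis .
qed (use assms in simp)

lemma mult_le_weighted_squares:
  fixes a b e :: real
  assumes "0 < e"
  shows "a * b \<le> e / 2 * a\<^sup>2 + 1 / (2 * e) * b\<^sup>2"
proof -
  have "0 \<le> (e * a - b)\<^sup>2"
    by simp
  then have "2 * e * (a * b) \<le> e\<^sup>2 * a\<^sup>2 + b\<^sup>2"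
    by (simp add: power2_eq_square algebra_simps)
  then show ?thesis
    using assms by (simp add: field_simps power2_eq_square)
qed

lemma power_even_average_le:
  fixes y :: "nat \<Rightarrow> real"
  assumes "n > 0"
  shows "(\<Sum>i<n. y i / real n) ^ (2 * m) \<le> (\<Sum>i<n. y i ^ (2 * m) / real n)"
proof -
  have "convex_on UNIV (\<lambda>x::real. x ^ (2 * m))"
    by (rule convex_power_even) simp
  moreover have "{..<n} \<noteq> {}"
    using assms by auto
  ultimately show ?thesis
    using convex_on_sum[of "{..<n}" UNIV "\<lambda>x. x ^ (2 * m)" "\<lambda>_. 1 / real n" y] assms
    by (simp add: divide_inverse ac_simps)
qed

lemma power_even_add3_le:
  fixes x y z :: real
  shows "(x + y + z) ^ (2 * m) \<le> 3 ^ (2 * m) * (x ^ (2 * m) + y ^ (2 * m) + z ^ (2 * m))"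
proof -
  let ?v = "\<lambda>i::nat. if i = 0 then x else if i = 1 then y else z"
  have "(\<Sum>i<3. ?v i / 3) ^ (2 * m) \<le> (\<Sum>i<3. ?v i ^ (2 * m) / 3)"
    using power_even_average_le[of 3 ?v m] by simp
  then have "((x + y + z) / 3) ^ (2 * m) \<le> (x ^ (2 * m) + y ^ (2 * m) + z ^ (2 * m)) / 3"
    by (simp add: eval_nat_numeral add_divide_distrib)
  also have "\<dots> \<le> x ^ (2 * m) + y ^ (2 * m) + z ^ (2 * m)"
    by simp
  finally show ?thesis
    by (simp add: power_divide field_simps)
qed

lemma abs_powr_le_even_power:
  fixes X c p :: real
  assumes c: "0 < c" and p: "1 \<le> p" "p \<le> real (2 * m)"
  shows "\<bar>X\<bar> powr p \<le> c powr (p / 2) * (1 + X ^ (2 * m) / c ^ m)"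
proof -
  define r where "r = sqrt c"
  have r: "0 < r" "r powr p = c powr (p / 2)" "r ^ (2 * m) = c ^ m"
    unfolding r_def power_mult using c by (simp_all add: powr_half_sqrt[symmetric] powr_powr,
        simp add: powr_half_sqrt)
  define y where "y = \<bar>X\<bar> / r"
  have y0: "0 \<le> y"
    unfolding y_def using r by simp
  have "\<bar>X\<bar> powr p = r powr p * y powr p"
    unfolding y_def using r c by (simp add: powr_divide)
  also have "y powr p \<le> 1 + y ^ (2 * m)"
  proof (cases "y \<le> 1")
    case True
    then show ?thesis
      using y0 p powr_le1[of p y] by (simp add: add_increasing2)
  next
    case False
    then have "y powr p \<le> y powr real (2 * m)"
      using p by (intro powr_mono) auto
    also have "\<dots> = y ^ (2 * m)"
      using False powr_realpow[of y "2 * m"] by simp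
    finally show ?thesis
      by simp
  qed
  also have "y ^ (2 * m) = X ^ (2 * m) / c ^ m"
    unfolding y_def using r c by (simp add: power_divide power_even_abs)
  finally show ?thesis
    using r by (simp add: mult_left_mono)
qed

lemma square_sum_le_weighted:
  fixes X w :: "nat \<Rightarrow> real"
  assumes "\<And>l. l \<in> A \<Longrightarrow> 0 < w l"
  shows "(\<Sum>l\<in>A. X l)\<^sup>2 \<le> (\<Sum>l\<in>A. w l) * (\<Sum>l\<in>A. (X l)\<^sup>2 / w l)"
proof -
  have "X l = sqrt (w l) * (X l / sqrt (w l))" if "l \<in> A" for l
    using assms[OF that] by simp
  then have "(\<Sum>l\<in>A. X l) = (\<Sum>l\<in>A. sqrt (w l) * (X l / sqrt (w l)))"
    by (rule sum.cong[OF refl])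
  then have "(\<Sum>l\<in>A. X l)\<^sup>2 \<le> (\<Sum>l\<in>A. (sqrt (w l))\<^sup>2) * (\<Sum>l\<in>A. (X l / sqrt (w l))\<^sup>2)"
    by (simp only: Cauchy_Schwarz_ineq_sum)
  also have "(\<Sum>l\<in>A. (sqrt (w l))\<^sup>2) = (\<Sum>l\<in>A. w l)"
    using assms by (intro sum.cong) (auto simp: less_imp_le)
  also have "(\<Sum>l\<in>A. (X l / sqrt (w l))\<^sup>2) = (\<Sum>l\<in>A. (X l)\<^sup>2 / w l)"
    using assms by (intro sum.cong) (auto simp: power_divide less_imp_le)
  finally show ?thesis .
qed

lemma power_even_mult_le:
  fixes c x K :: real
  assumes "\<bar>c\<bar> \<le> K"
  shows "(c * x) ^ (2 * m) \<le> K ^ (2 * m) * x ^ (2 * m)"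
proof -
  have "\<bar>c\<bar> ^ (2 * m) \<le> K ^ (2 * m)"
    using assms by (intro power_mono) auto
  then show ?thesis
    by (simp add: power_mult_distrib power_even_abs[symmetric, of "2 * m" c] mult_right_mono)
qed

lemma abs_exp_minus_one_power_le:
  fixes x \<delta> \<sigma> c :: real
  assumes \<sigma>: "0 < \<sigma>" "\<sigma> \<le> 1" and \<delta>: "0 \<le> \<delta>" "\<delta> \<le> c * \<sigma>\<^sup>2"
  shows "\<bar>exp (x - \<delta>) - 1\<bar> ^ N
    \<le> \<sigma> ^ N * (real N ^ N * exp (real (Suc N) * c)) * exp (real (Suc N) / \<sigma> * \<bar>x\<bar>)"
proof -
  have "0 \<le> c * \<sigma>\<^sup>2" "0 < \<sigma>\<^sup>2"
    using \<delta> \<sigma> by auto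
  then have c: "0 \<le> c"
    by (simp add: zero_le_mult_iff)
  define Z where "Z = \<bar>x\<bar> / \<sigma>"
  have Z: "0 \<le> Z" "\<bar>x\<bar> = \<sigma> * Z"
    unfolding Z_def using \<sigma> by auto
  have "c * \<sigma>\<^sup>2 \<le> c * \<sigma>"
    using \<sigma> c by (intro mult_left_mono) (auto simp: power2_eq_square mult_left_le_one_le)
  then have Y: "\<bar>x - \<delta>\<bar> \<le> \<sigma> * (Z + c)"
    using Z \<delta> by (simp add: algebra_simps)
  have "\<sigma> * (Z + c) \<le> Z + c"
    using \<sigma> Z c by (intro mult_left_le_one_le) auto
  then have "\<bar>x - \<delta>\<bar> * exp \<bar>x - \<delta>\<bar> \<le> \<sigma> * (Z + c) * exp (Z + c)"
    using Y by (intro mult_mono) auto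
  then have "\<bar>exp (x - \<delta>) - 1\<bar> \<le> \<sigma> * (Z + c) * exp (Z + c)"
    using abs_exp_minus_one_le[of "x - \<delta>"] by linarith
  then have "\<bar>exp (x - \<delta>) - 1\<bar> ^ N \<le> (\<sigma> * (Z + c) * exp (Z + c)) ^ N"
    by (intro power_mono) auto
  also have "\<dots> = \<sigma> ^ N * (Z + c) ^ N * exp (Z + c) ^ N"
    by (simp only: power_mult_distrib)
  also have "\<dots> \<le> \<sigma> ^ N * (real N ^ N * exp (Z + c)) * exp (Z + c) ^ N"
    using power_le_exp[of "Z + c" N] Z c \<sigma> by (intro mult_right_mono mult_left_mono) auto
  also have "\<dots> = \<sigma> ^ N * (real N ^ N * exp (real (Suc N) * c)) * exp (real (Suc N) / \<sigma> * \<bar>x\<bar>)"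
  proof -
    have "exp (Z + c) * exp (Z + c) ^ N = exp (real (Suc N) * c) * exp (real (Suc N) / \<sigma> * \<bar>x\<bar>)"
      unfolding exp_of_nat_mult[symmetric] exp_add[symmetric] Z_def using \<sigma> by (simp add: field_simps)
    then show ?thesis
      by (simp only: mult.assoc)
  qed
  finally show ?thesis .
qed

lemma normal_density_mult_exp:
  assumes "\<sigma> > 0"
  shows "normal_density 0 \<sigma> x * exp (c * x) = exp (c\<^sup>2 * \<sigma>\<^sup>2 / 2) * normal_density (c * \<sigma>\<^sup>2) \<sigma> x"
proof -
  have "- (x - 0)\<^sup>2 / (2 * \<sigma>\<^sup>2) + c * x = c\<^sup>2 * \<sigma>\<^sup>2 / 2 + (- (x - c * \<sigma>\<^sup>2)\<^sup>2 / (2 * \<sigma>\<^sup>2))"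
    using assms by (simp add: field_simps power2_eq_square)
  then show ?thesis
    unfolding normal_density_def
    by (simp add: exp_add[symmetric] mult.assoc mult.left_commute[of "exp _"])
qed

lemma integrable_dominated_nonneg:
  fixes f g :: "'a \<Rightarrow> real"
  assumes "integrable M g" "f \<in> borel_measurable M"
    and "\<And>x. x \<in> space M \<Longrightarrow> 0 \<le> f x" "\<And>x. x \<in> space M \<Longrightarrow> f x \<le> g x"
  shows "integrable M f"
  by (rule Bochner_Integration.integrable_bound[OF assms(1,2)])
    (use assms in \<open>auto intro!: AE_I2 intro: order_trans[OF _ abs_ge_self]\<close>)

lemma integrable_integral_le_dominated:
  fixes f g :: "'a \<Rightarrow> real"
  assumes g: "integrable M g" and f: "f \<in> borel_measurable M"
    and fg: "\<And>x. x \<in> space M \<Longrightarrow> 0 \<le> f x \<and> f x \<le> g x" and B: "(\<integral>x. g x \<partial>M) \<le> B"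
  shows "integrable M f" "(\<integral>x. f x \<partial>M) \<le> B"
proof -
  show "integrable M f"
    using fg by (intro integrable_dominated_nonneg[OF g f]) auto
  have "(\<integral>x. f x \<partial>M) \<le> (\<integral>x. g x \<partial>M)"
    using fg by (intro integral_mono'[OF g]) (auto intro: order_trans)
  then show "(\<integral>x. f x \<partial>M) \<le> B"
    using B by linarith
qed

lemma integrable_limit_integral_le:
  fixes f :: "nat \<Rightarrow> 'a \<Rightarrow> real"
  assumes fm: "\<And>n. f n \<in> borel_measurable M" and f0: "\<And>n x. x \<in> space M \<Longrightarrow> 0 \<le> f n x"
    and lim: "\<And>x. x \<in> space M \<Longrightarrow> (\<lambda>n. f n x) \<longlonglongrightarrow> g x"
    and fi: "\<And>n. integrable M (f n)" and fB: "\<And>n. (\<integral>x. f n x \<partial>M) \<le> B"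
  shows "integrable M g" "(\<integral>x. g x \<partial>M) \<le> B"
proof -
  have gm: "g \<in> borel_measurable M"
    by (rule borel_measurable_LIMSEQ_metric[OF fm lim])
  have "0 \<le> g x" if "x \<in> space M" for x
    using LIMSEQ_le_const[OF lim[OF that]] f0[OF that] by blast
  then have g0: "AE x in M. 0 \<le> g x"
    by (rule AE_I2)
  have "ennreal (g x) = liminf (\<lambda>n. ennreal (f n x))" if "x \<in> space M" for x
    using lim_imp_Liminf[OF _ tendsto_ennrealI[OF lim[OF that]]] by simp
  then have "(\<integral>\<^sup>+x. ennreal (g x) \<partial>M) = (\<integral>\<^sup>+x. liminf (\<lambda>n. ennreal (f n x)) \<partial>M)"
    by (rule nn_integral_cong)
  also have "\<dots> \<le> liminf (\<lambda>n. \<integral>\<^sup>+x. ennreal (f n x) \<partial>M)"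
    by (rule nn_integral_liminf) (use fm in simp)
  also have "\<dots> = liminf (\<lambda>n. ennreal (\<integral>x. f n x \<partial>M))"
    using nn_integral_eq_integral[OF fi] f0 by (simp add: AE_I2)
  also have "\<dots> \<le> limsup (\<lambda>n. ennreal (\<integral>x. f n x \<partial>M))"
    by (rule Liminf_le_Limsup) simp
  also have "\<dots> \<le> ennreal B"
    by (rule Limsup_bounded) (use fB in \<open>auto intro!: always_eventually ennreal_leI\<close>)
  finally have nn: "(\<integral>\<^sup>+x. ennreal (g x) \<partial>M) \<le> ennreal B" .
  show ig: "integrable M g"
    using nn gm g0 by (intro integrableI_nonneg) (auto simp: le_less_trans)
  have "0 \<le> (\<integral>x. f 0 x \<partial>M)"
    using f0 by (intro integral_nonneg_AE AE_I2) auto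
  then have "0 \<le> B"
    using fB[of 0] by linarith
  then show "(\<integral>x. g x \<partial>M) \<le> B"
    using nn nn_integral_eq_integral[OF ig g0] by simp
qed

definition exp_minus_one_moment_const :: "nat \<Rightarrow> real \<Rightarrow> real \<Rightarrow> real" where
  "exp_minus_one_moment_const N K c =
     real N ^ N * exp (real (Suc N) * c) * (2 * exp ((real (Suc N))\<^sup>2 * K\<^sup>2 / 2))"

context prob_space
begin

lemma normal_exp_integral:
  assumes D: "distributed M lborel X (\<lambda>x. ennreal (normal_density 0 \<sigma> x))" and \<sigma>: "\<sigma> > 0"
  shows "integrable M (\<lambda>\<omega>. exp (c * X \<omega>))" "(\<integral>\<omega>. exp (c * X \<omega>) \<partial>M) = exp (c\<^sup>2 * \<sigma>\<^sup>2 / 2)"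
proof -
  have eq: "(\<lambda>x. normal_density 0 \<sigma> x * exp (c * x)) = (\<lambda>x. exp (c\<^sup>2 * \<sigma>\<^sup>2 / 2) * normal_density (c * \<sigma>\<^sup>2) \<sigma> x)"
    using normal_density_mult_exp[OF \<sigma>] by auto
  show "integrable M (\<lambda>\<omega>. exp (c * X \<omega>))"
    using distributed_integrable[OF D, of "\<lambda>x. exp (c * x)"] \<sigma> unfolding eq by simp
  show "(\<integral>\<omega>. exp (c * X \<omega>) \<partial>M) = exp (c\<^sup>2 * \<sigma>\<^sup>2 / 2)"
    using distributed_integral[OF D, of "\<lambda>x. exp (c * x)", symmetric] \<sigma> unfolding eq by simp
qed

definition subgaussian :: "('a \<Rightarrow> real) \<Rightarrow> real \<Rightarrow> bool" where
  "subgaussian J v \<longleftrightarrow> J \<in> borel_measurable M \<and>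
     (\<forall>l. integrable M (\<lambda>\<omega>. exp (l * J \<omega>)) \<and> (\<integral>\<omega>. exp (l * J \<omega>) \<partial>M) \<le> exp (l\<^sup>2 * v / 2))"

lemma subgaussian_exp_abs:
  assumes J: "subgaussian J v" and l: "0 \<le> l"
  shows "integrable M (\<lambda>\<omega>. exp (l * \<bar>J \<omega>\<bar>))" "(\<integral>\<omega>. exp (l * \<bar>J \<omega>\<bar>) \<partial>M) \<le> 2 * exp (l\<^sup>2 * v / 2)"
proof -
  have Ji: "integrable M (\<lambda>\<omega>. exp (c * J \<omega>))" and Jb: "(\<integral>\<omega>. exp (c * J \<omega>) \<partial>M) \<le> exp (c\<^sup>2 * v / 2)" for c
    using J unfolding subgaussian_def by auto
  have pw: "exp (l * \<bar>J \<omega>\<bar>) \<le> exp (l * J \<omega>) + exp ((- l) * J \<omega>)" for \<omega>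
    by (cases "0 \<le> J \<omega>") (simp_all add: add_increasing add_increasing2)
  have isum: "integrable M (\<lambda>\<omega>. exp (l * J \<omega>) + exp ((- l) * J \<omega>))"
    by (intro Bochner_Integration.integrable_add Ji)
  show "integrable M (\<lambda>\<omega>. exp (l * \<bar>J \<omega>\<bar>))"
    using J pw unfolding subgaussian_def by (intro integrable_dominated_nonneg[OF isum]) auto
  have "(\<integral>\<omega>. exp (l * \<bar>J \<omega>\<bar>) \<partial>M) \<le> (\<integral>\<omega>. exp (l * J \<omega>) + exp ((- l) * J \<omega>) \<partial>M)"
    using pw by (intro integral_mono'[OF isum]) (auto intro: add_nonneg_nonneg)
  also have "\<dots> \<le> exp (l\<^sup>2 * v / 2) + exp ((- l)\<^sup>2 * v / 2)"
    unfolding Bochner_Integration.integral_add[OF Ji[of l] Ji[of "- l"]] by (rule add_mono[OF Jb Jb])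
  finally show "(\<integral>\<omega>. exp (l * \<bar>J \<omega>\<bar>) \<partial>M) \<le> 2 * exp (l\<^sup>2 * v / 2)"
    by simp
qed

lemma subgaussian_exp_minus_one_moment:
  assumes J: "subgaussian J (K\<^sup>2 * \<sigma>\<^sup>2)" and \<sigma>: "0 < \<sigma>" "\<sigma> \<le> 1"
    and \<delta>: "0 \<le> \<delta>" "\<delta> \<le> c * \<sigma>\<^sup>2"
  shows "integrable M (\<lambda>\<omega>. \<bar>exp (J \<omega> - \<delta>) - 1\<bar> ^ N)"
    "(\<integral>\<omega>. \<bar>exp (J \<omega> - \<delta>) - 1\<bar> ^ N \<partial>M) \<le> exp_minus_one_moment_const N K c * \<sigma> ^ N"
proof -
  define l where "l = real (Suc N) / \<sigma>"
  have l: "0 \<le> l" "l\<^sup>2 * (K\<^sup>2 * \<sigma>\<^sup>2) = (real (Suc N))\<^sup>2 * K\<^sup>2"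
    unfolding l_def using \<sigma> by (simp_all add: field_simps)
  let ?C = "real N ^ N * exp (real (Suc N) * c)"
  note E = subgaussian_exp_abs[OF J l(1)]
  have pw: "\<bar>exp (J \<omega> - \<delta>) - 1\<bar> ^ N \<le> \<sigma> ^ N * ?C * exp (l * \<bar>J \<omega>\<bar>)" for \<omega>
    unfolding l_def by (rule abs_exp_minus_one_power_le[OF \<sigma> \<delta>])
  have i2: "integrable M (\<lambda>\<omega>. \<sigma> ^ N * ?C * exp (l * \<bar>J \<omega>\<bar>))"
    using E(1) by simp
  show "integrable M (\<lambda>\<omega>. \<bar>exp (J \<omega> - \<delta>) - 1\<bar> ^ N)"
    using J pw unfolding subgaussian_def by (intro integrable_dominated_nonneg[OF i2]) auto
  have "(\<integral>\<omega>. \<bar>exp (J \<omega> - \<delta>) - 1\<bar> ^ N \<partial>M) \<le> (\<integral>\<omega>. \<sigma> ^ N * ?C * exp (l * \<bar>J \<omega>\<bar>) \<partial>M)"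
    using pw \<sigma> by (intro integral_mono'[OF i2]) auto
  also have "\<dots> \<le> \<sigma> ^ N * ?C * (2 * exp (l\<^sup>2 * (K\<^sup>2 * \<sigma>\<^sup>2) / 2))"
    using E(2) \<sigma> by (simp add: mult_left_mono)
  finally show "(\<integral>\<omega>. \<bar>exp (J \<omega> - \<delta>) - 1\<bar> ^ N \<partial>M) \<le> exp_minus_one_moment_const N K c * \<sigma> ^ N"
    unfolding exp_minus_one_moment_const_def l(2) by (simp add: mult_ac)
qed

lemma average_moment_le:
  fixes X :: "nat \<Rightarrow> 'a \<Rightarrow> real"
  assumes n: "n > 0" and L: "0 \<le> L"
    and int: "\<And>i. i < n \<Longrightarrow> integrable M (\<lambda>\<omega>. X i \<omega> ^ (2 * m))"
    and meas: "\<And>i. i < n \<Longrightarrow> X i \<in> borel_measurable M"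
    and bnd: "\<And>i. i < n \<Longrightarrow> (\<integral>\<omega>. X i \<omega> ^ (2 * m) \<partial>M) \<le> B"
  shows "integrable M (\<lambda>\<omega>. (\<Sum>i<n. X i \<omega> * (L / real n)) ^ (2 * m))"
    "(\<integral>\<omega>. (\<Sum>i<n. X i \<omega> * (L / real n)) ^ (2 * m) \<partial>M) \<le> L ^ (2 * m) * B"
proof -
  let ?R = "\<lambda>\<omega>. L ^ (2 * m) * (\<Sum>i<n. X i \<omega> ^ (2 * m) / real n)"
  have pw: "(\<Sum>i<n. X i \<omega> * (L / real n)) ^ (2 * m) \<le> ?R \<omega>" for \<omega>
  proof -
    have "(\<Sum>i<n. X i \<omega> * (L / real n)) = L * (\<Sum>i<n. X i \<omega> / real n)"
      by (simp add: sum_distrib_left ac_simps)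
    then have "(\<Sum>i<n. X i \<omega> * (L / real n)) ^ (2 * m) = L ^ (2 * m) * (\<Sum>i<n. X i \<omega> / real n) ^ (2 * m)"
      by (simp only: power_mult_distrib)
    also have "\<dots> \<le> ?R \<omega>"
      using power_even_average_le[OF n] L by (intro mult_left_mono) auto
    finally show ?thesis .
  qed
  have Ri: "integrable M ?R"
    using int by auto
  show "integrable M (\<lambda>\<omega>. (\<Sum>i<n. X i \<omega> * (L / real n)) ^ (2 * m))"
    using pw meas by (intro integrable_dominated_nonneg[OF Ri]) auto
  have "(\<integral>\<omega>. (\<Sum>i<n. X i \<omega> * (L / real n)) ^ (2 * m) \<partial>M) \<le> (\<integral>\<omega>. ?R \<omega> \<partial>M)"
    using pw L by (intro integral_mono'[OF Ri] mult_nonneg_nonneg sum_nonneg) auto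
  also have "\<dots> = L ^ (2 * m) * (\<Sum>i<n. (\<integral>\<omega>. X i \<omega> ^ (2 * m) \<partial>M) / real n)"
    using int by (simp add: Bochner_Integration.integral_sum)
  also have "\<dots> \<le> L ^ (2 * m) * (\<Sum>i<n. B / real n)"
    using bnd L by (intro mult_left_mono sum_mono divide_right_mono) auto
  finally show "(\<integral>\<omega>. (\<Sum>i<n. X i \<omega> * (L / real n)) ^ (2 * m) \<partial>M) \<le> L ^ (2 * m) * B"
    using n by simp
qed

lemma integral_path_moment_le:
  fixes h :: "real \<Rightarrow> 'a \<Rightarrow> real"
  assumes ab: "a \<le> b"
    and cont: "\<And>\<omega>. \<omega> \<in> space M \<Longrightarrow> continuous_on {a..b} (\<lambda>u. h u \<omega>)"
    and meas: "\<And>u. u \<in> {a..b} \<Longrightarrow> h u \<in> borel_measurable M"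
    and int: "\<And>u. u \<in> {a..b} \<Longrightarrow> integrable M (\<lambda>\<omega>. h u \<omega> ^ (2 * m))"
    and bnd: "\<And>u. u \<in> {a..b} \<Longrightarrow> (\<integral>\<omega>. h u \<omega> ^ (2 * m) \<partial>M) \<le> B"
  shows "(\<lambda>\<omega>. integral {a..b} (\<lambda>u. h u \<omega>)) \<in> borel_measurable M"
    "integrable M (\<lambda>\<omega>. integral {a..b} (\<lambda>u. h u \<omega>) ^ (2 * m))"
    "(\<integral>\<omega>. integral {a..b} (\<lambda>u. h u \<omega>) ^ (2 * m) \<partial>M) \<le> (b - a) ^ (2 * m) * B"
proof -
  let ?S = "\<lambda>n \<omega>. \<Sum>i<Suc n. h (unif_pt a b (Suc n) i) \<omega> * ((b - a) / real (Suc n))"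
  have pt: "unif_pt a b (Suc n) i \<in> {a..b}" if "i < Suc n" for n i
    using unif_pt_in_Icc[OF ab] that by simp
  have lim: "(\<lambda>n. ?S n \<omega>) \<longlonglongrightarrow> integral {a..b} (\<lambda>u. h u \<omega>)" if "\<omega> \<in> space M" for \<omega>
    using LIMSEQ_Suc[OF riemann_sum_tendsto_integral[OF ab cont[OF that]]] .
  have Sm: "?S n \<in> borel_measurable M" for n
    using meas pt by (intro borel_measurable_sum borel_measurable_times) auto
  show "(\<lambda>\<omega>. integral {a..b} (\<lambda>u. h u \<omega>)) \<in> borel_measurable M"
    by (rule borel_measurable_LIMSEQ_metric[OF Sm lim])
  have L: "0 \<le> b - a"
    using ab by simp
  note avg = average_moment_le[where X = "\<lambda>i. h (unif_pt a b (Suc n) i)" for n,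
      OF zero_less_Suc L int[OF pt] meas[OF pt] bnd[OF pt]]
  have "(\<lambda>n. ?S n \<omega> ^ (2 * m)) \<longlonglongrightarrow> integral {a..b} (\<lambda>u. h u \<omega>) ^ (2 * m)"
    if "\<omega> \<in> space M" for \<omega>
    by (rule tendsto_power[OF lim[OF that]])
  from integrable_limit_integral_le[where f = "\<lambda>n \<omega>. ?S n \<omega> ^ (2 * m)", OF _ _ this avg]
  show "integrable M (\<lambda>\<omega>. integral {a..b} (\<lambda>u. h u \<omega>) ^ (2 * m))"
    "(\<integral>\<omega>. integral {a..b} (\<lambda>u. h u \<omega>) ^ (2 * m) \<partial>M) \<le> (b - a) ^ (2 * m) * B"
    using Sm by auto
qed

lemma sum_square_moment_le:
  fixes X :: "nat \<Rightarrow> 'a \<Rightarrow> real"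
  assumes A: "finite A" and w: "\<And>l. l \<in> A \<Longrightarrow> 0 < w l"
    and meas: "\<And>l. l \<in> A \<Longrightarrow> X l \<in> borel_measurable M"
    and int: "\<And>l. l \<in> A \<Longrightarrow> integrable M (\<lambda>\<omega>. (X l \<omega>)\<^sup>2)"
    and bnd: "\<And>l. l \<in> A \<Longrightarrow> (\<integral>\<omega>. (X l \<omega>)\<^sup>2 \<partial>M) \<le> C * (w l)\<^sup>2"
  shows "integrable M (\<lambda>\<omega>. (\<Sum>l\<in>A. X l \<omega>)\<^sup>2)" "(\<integral>\<omega>. (\<Sum>l\<in>A. X l \<omega>)\<^sup>2 \<partial>M) \<le> C * (\<Sum>l\<in>A. w l)\<^sup>2"
proof -
  let ?R = "\<lambda>\<omega>. (\<Sum>l\<in>A. w l) * (\<Sum>l\<in>A. (X l \<omega>)\<^sup>2 / w l)"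
  have W: "0 \<le> (\<Sum>l\<in>A. w l)"
    using w by (simp add: less_imp_le sum_nonneg)
  have Ri: "integrable M ?R"
    using int by simp
  have "(\<lambda>\<omega>. \<Sum>l\<in>A. X l \<omega>) \<in> borel_measurable M"
    using meas by (rule borel_measurable_sum)
  then have "(\<lambda>\<omega>. (\<Sum>l\<in>A. X l \<omega>)\<^sup>2) \<in> borel_measurable M"
    by measurable
  moreover have "0 \<le> (\<Sum>l\<in>A. X l \<omega>)\<^sup>2 \<and> (\<Sum>l\<in>A. X l \<omega>)\<^sup>2 \<le> ?R \<omega>" for \<omega>
    using square_sum_le_weighted[of A w] w by simp
  moreover have "(\<integral>\<omega>. ?R \<omega> \<partial>M) \<le> C * (\<Sum>l\<in>A. w l)\<^sup>2"
  proof -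
    have "(\<integral>\<omega>. ?R \<omega> \<partial>M) = (\<Sum>l\<in>A. w l) * (\<Sum>l\<in>A. (\<integral>\<omega>. (X l \<omega>)\<^sup>2 \<partial>M) / w l)"
      using int by (simp add: Bochner_Integration.integral_sum)
    also have "\<dots> \<le> (\<Sum>l\<in>A. w l) * (\<Sum>l\<in>A. C * w l)"
      using bnd w W by (intro mult_left_mono sum_mono) (auto simp: divide_le_eq power2_eq_square mult.assoc)
    finally show ?thesis
      by (simp add: sum_distrib_left[symmetric] power2_eq_square mult_ac)
  qed
  ultimately show "integrable M (\<lambda>\<omega>. (\<Sum>l\<in>A. X l \<omega>)\<^sup>2)" "(\<integral>\<omega>. (\<Sum>l\<in>A. X l \<omega>)\<^sup>2 \<partial>M) \<le> C * (\<Sum>l\<in>A. w l)\<^sup>2"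
    using integrable_integral_le_dominated[OF Ri] by blast+
qed

end

section \<open>Brownian motion and Wiener integrals of deterministic integrands\<close>

locale brownian =
  fixes M :: "'a measure" and F :: "real \<Rightarrow> 'a measure" and W :: "real \<Rightarrow> 'a \<Rightarrow> real"
  assumes std_BM: "std_BM M F W"
begin

sublocale prob_space M
  using std_BM unfolding std_BM_def by auto

lemma subalgebra_F: "t \<in> {0..1} \<Longrightarrow> subalgebra M (F t)"
  using std_BM unfolding std_BM_def by auto

lemma sets_F_mono: "0 \<le> s \<Longrightarrow> s \<le> t \<Longrightarrow> t \<le> 1 \<Longrightarrow> sets (F s) \<subseteq> sets (F t)"
  using std_BM unfolding std_BM_def by auto

lemma W_adapted: "t \<in> {0..1} \<Longrightarrow> W t \<in> borel_measurable (F t)"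
  using std_BM unfolding std_BM_def by auto

lemma W_continuous_on: "\<omega> \<in> space M \<Longrightarrow> continuous_on {0..1} (\<lambda>t. W t \<omega>)"
  using std_BM unfolding std_BM_def by auto

lemma W_increment_distributed:
  "0 \<le> s \<Longrightarrow> s < t \<Longrightarrow> t \<le> 1 \<Longrightarrow>
   distributed M lborel (\<lambda>\<omega>. W t \<omega> - W s \<omega>) (\<lambda>x. ennreal (normal_density 0 (sqrt (t - s)) x))"
  using std_BM unfolding std_BM_def by auto

lemma W_increment_indep:
  "0 \<le> s \<Longrightarrow> s < t \<Longrightarrow> t \<le> 1 \<Longrightarrow>
   indep_set (sets (F s)) (sets (vimage_algebra (space M) (\<lambda>\<omega>. W t \<omega> - W s \<omega>) borel))"
  using std_BM unfolding std_BM_def by auto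

lemma W_measurable [measurable]: "t \<in> {0..1} \<Longrightarrow> W t \<in> borel_measurable M"
  using measurable_from_subalg[OF subalgebra_F W_adapted] by blast

lemma measurable_F_mono:
  assumes "0 \<le> s" "s \<le> t" "t \<le> 1" "f \<in> measurable (F s) N"
  shows "f \<in> measurable (F t) N"
proof (rule measurable_from_subalg[OF _ assms(4)])
  show "subalgebra (F t) (F s)"
    using subalgebra_F[of s] subalgebra_F[of t] sets_F_mono[OF assms(1-3)] assms
    unfolding subalgebra_def by auto
qed

lemma W_increment_exp_integral:
  assumes "0 \<le> s" "s \<le> t" "t \<le> 1"
  shows "integrable M (\<lambda>\<omega>. exp (c * (W t \<omega> - W s \<omega>)))"
    "(\<integral>\<omega>. exp (c * (W t \<omega> - W s \<omega>)) \<partial>M) = exp (c\<^sup>2 * (t - s) / 2)"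
proof (atomize (full), cases "s = t")
  case False
  then have "s < t" "(sqrt (t - s))\<^sup>2 = t - s"
    using assms by auto
  then show "integrable M (\<lambda>\<omega>. exp (c * (W t \<omega> - W s \<omega>))) \<and>
    (\<integral>\<omega>. exp (c * (W t \<omega> - W s \<omega>)) \<partial>M) = exp (c\<^sup>2 * (t - s) / 2)"
    using normal_exp_integral[OF W_increment_distributed[OF assms(1) _ assms(3)], of c] by simp
qed (simp add: prob_space)

lemma indep_var_F_W_increment:
  assumes st: "0 \<le> s" "s < t" "t \<le> 1"
    and P: "P \<in> borel_measurable (F s)" and g: "g \<in> borel_measurable borel"
  shows "indep_var borel P borel (\<lambda>\<omega>. g (W t \<omega> - W s \<omega>))"
proof -
  let ?D = "\<lambda>\<omega>. W t \<omega> - W s \<omega>"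
  let ?V = "vimage_algebra (space M) ?D borel"
  let ?Q = "\<lambda>\<omega>. g (?D \<omega>)"
  have sF: "space (F s) = space M"
    using subalgebra_F[of s] st unfolding subalgebra_def by auto
  have PM: "P \<in> borel_measurable M"
    using measurable_from_subalg[OF subalgebra_F P] st by auto
  have Q: "?Q \<in> borel_measurable ?V"
    using measurable_comp[OF measurable_vimage_algebra1 g, of ?D "space M"] by (simp add: comp_def)
  have [measurable]: "W t \<in> borel_measurable M" "W s \<in> borel_measurable M"
    using st by auto
  have QM: "?Q \<in> borel_measurable M"
    using g by measurable
  have "sigma_sets (space M) {P -` A \<inter> space M | A. A \<in> sets borel} \<subseteq> sets (F s)"
    using measurable_sets[OF P] sF sigma_sets_le_sets_iff[of "F s"] by auto
  moreover have "sigma_sets (space M) {?Q -` A \<inter> space M | A. A \<in> sets borel} \<subseteq> sets ?V"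
    using measurable_sets[OF Q] sigma_sets_le_sets_iff[of ?V] by auto
  ultimately have "indep_set (sigma_sets (space M) {P -` A \<inter> space M | A. A \<in> sets borel})
      (sigma_sets (space M) {?Q -` A \<inter> space M | A. A \<in> sets borel})"
    using W_increment_indep[OF st] unfolding indep_sets2_eq by blast
  then show ?thesis
    unfolding indep_var_eq using PM QM by auto
qed

lemma W_increment_sum_measurable:
  fixes x :: "nat \<Rightarrow> real"
  assumes "\<And>i. i < m \<Longrightarrow> x i \<le> x (Suc i)" "0 \<le> x 0" "x m \<le> 1"
  shows "(\<lambda>\<omega>. \<Sum>i<m. c i * (W (x (Suc i)) \<omega> - W (x i) \<omega>)) \<in> borel_measurable (F (x m))"
proof -
  have "W (x i) \<in> borel_measurable (F (x m))" if "i \<le> m" for i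
  proof (rule measurable_F_mono[OF _ _ assms(3) W_adapted])
    show "0 \<le> x i" "x i \<le> x m"
      using chain_le[of m x 0 i] chain_le[of m x i m] assms that by auto
    then show "x i \<in> {0..1}"
      using assms(3) by auto
  qed
  then show ?thesis
    by (intro borel_measurable_sum borel_measurable_times borel_measurable_diff
        borel_measurable_const) auto
qed

lemma W_increment_sum_exp_integral:
  fixes x :: "nat \<Rightarrow> real"
  assumes "\<And>i. i < m \<Longrightarrow> x i \<le> x (Suc i)" "0 \<le> x 0" "x m \<le> 1"
  shows "integrable M (\<lambda>\<omega>. exp (\<Sum>i<m. c i * (W (x (Suc i)) \<omega> - W (x i) \<omega>))) \<and>
    (\<integral>\<omega>. exp (\<Sum>i<m. c i * (W (x (Suc i)) \<omega> - W (x i) \<omega>)) \<partial>M)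
      = exp (\<Sum>i<m. (c i)\<^sup>2 * (x (Suc i) - x i) / 2)"
  using assms
proof (induction m)
  case (Suc m)
  let ?P = "\<lambda>\<omega>. exp (\<Sum>i<m. c i * (W (x (Suc i)) \<omega> - W (x i) \<omega>))"
  let ?Q = "\<lambda>\<omega>. exp (c m * (W (x (Suc m)) \<omega> - W (x m) \<omega>))"
  have x1: "x m \<le> x (Suc m)"
    using Suc.prems(1) by simp
  moreover have "0 \<le> x m"
    using chain_le[of "Suc m" x 0 m] Suc.prems by simp
  moreover have "x m \<le> 1"
    using x1 Suc.prems(3) by linarith
  ultimately have x: "x m \<le> x (Suc m)" "0 \<le> x m" "x m \<le> 1"
    by auto
  have IH: "integrable M ?P" "(\<integral>\<omega>. ?P \<omega> \<partial>M) = exp (\<Sum>i<m. (c i)\<^sup>2 * (x (Suc i) - x i) / 2)"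
    using Suc x by auto
  note Q = W_increment_exp_integral[OF x(2,1) Suc.prems(3), of "c m"]
  have "integrable M (\<lambda>\<omega>. ?P \<omega> * ?Q \<omega>) \<and> (\<integral>\<omega>. ?P \<omega> * ?Q \<omega> \<partial>M) = (\<integral>\<omega>. ?P \<omega> \<partial>M) * (\<integral>\<omega>. ?Q \<omega> \<partial>M)"
  proof (cases "x m = x (Suc m)")
    case False
    have "?P \<in> borel_measurable (F (x m))"
      using W_increment_sum_measurable[of m x c] Suc.prems x by auto
    then have "indep_var borel ?P borel ?Q"
      using indep_var_F_W_increment[of "x m" "x (Suc m)" ?P "\<lambda>y. exp (c m * y)"] Suc.prems x False
      by auto
    from indep_var_integrable[OF this IH(1) Q(1)] indep_var_lebesgue_integral[OF this IH(1) Q(1)]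
    show ?thesis
      by simp
  qed (use IH in \<open>simp add: prob_space\<close>)
  then show ?case
    using IH Q by (simp add: exp_add)
qed (simp add: prob_space)

lemma W_stieltjes_sum_exp_integral:
  fixes n :: nat
  assumes ab: "0 \<le> a" "a \<le> b" "b \<le> 1" and K: "\<And>x. x \<in> {a..b} \<Longrightarrow> \<bar>f x\<bar> \<le> K"
  defines "S \<equiv> \<lambda>\<omega>. \<Sum>i<n. f (unif_pt a b n i) * (W (unif_pt a b n (Suc i)) \<omega> - W (unif_pt a b n i) \<omega>)"
  shows "S \<in> borel_measurable M" "integrable M (\<lambda>\<omega>. exp (l * S \<omega>))"
    "(\<integral>\<omega>. exp (l * S \<omega>) \<partial>M) \<le> exp (l\<^sup>2 * (K\<^sup>2 * (b - a)) / 2)"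
proof -
  let ?x = "unif_pt a b n"
  have pt: "?x i \<in> {a..b}" "?x i \<in> {0..1}" if "i \<le> n" for i
    using unif_pt_in_Icc[OF ab(2) that] ab by auto
  show "S \<in> borel_measurable M"
    unfolding S_def by (intro borel_measurable_sum borel_measurable_times borel_measurable_diff
        borel_measurable_const W_measurable pt(2)) auto
  have "l * S \<omega> = (\<Sum>i<n. (l * f (?x i)) * (W (?x (Suc i)) \<omega> - W (?x i) \<omega>))" for \<omega>
    unfolding S_def by (simp add: sum_distrib_left mult.assoc)
  moreover have hyps: "\<And>i. i < n \<Longrightarrow> ?x i \<le> ?x (Suc i)" "0 \<le> ?x 0" "?x n \<le> 1"
    using unif_pt_mono[OF ab(2)] pt(2)[of n] ab(1) by auto
  ultimately have E: "integrable M (\<lambda>\<omega>. exp (l * S \<omega>))"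
    "(\<integral>\<omega>. exp (l * S \<omega>) \<partial>M) = exp (\<Sum>i<n. (l * f (?x i))\<^sup>2 * (?x (Suc i) - ?x i) / 2)"
    using W_increment_sum_exp_integral[OF hyps, of "\<lambda>i. l * f (?x i)"] by auto
  then show "integrable M (\<lambda>\<omega>. exp (l * S \<omega>))"
    by blast
  have "(l * f (?x i))\<^sup>2 * (?x (Suc i) - ?x i) / 2 \<le> l\<^sup>2 * K\<^sup>2 * (?x (Suc i) - ?x i) / 2" if "i < n" for i
  proof -
    have "\<bar>f (?x i)\<bar>\<^sup>2 \<le> K\<^sup>2"
      using K[OF pt(1)] that by (intro power_mono) auto
    then have "(l * f (?x i))\<^sup>2 \<le> l\<^sup>2 * K\<^sup>2"
      unfolding power_mult_distrib by (intro mult_left_mono) auto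
    then show ?thesis
      using hyps(1)[OF that] by (intro divide_right_mono mult_right_mono) auto
  qed
  then have "(\<Sum>i<n. (l * f (?x i))\<^sup>2 * (?x (Suc i) - ?x i) / 2) \<le> (\<Sum>i<n. l\<^sup>2 * K\<^sup>2 * (?x (Suc i) - ?x i) / 2)"
    by (intro sum_mono) auto
  also have "\<dots> \<le> l\<^sup>2 * (K\<^sup>2 * (b - a)) / 2"
    using ab by (cases "n = 0") (simp_all add: sum_divide_distrib[symmetric]
        sum_distrib_left[symmetric] sum_lessThan_telescope mult.assoc)
  finally show "(\<integral>\<omega>. exp (l * S \<omega>) \<partial>M) \<le> exp (l\<^sup>2 * (K\<^sup>2 * (b - a)) / 2)"
    unfolding E(2) by simp
qed

text \<open>The Riemann-Stieltjes sums are Gaussian with variance at most \<open>K\<^sup>2 (b - a)\<close>; the bound on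
  their exponential moments passes to the pathwise limit by Fatou's lemma.\<close>
lemma subgaussian_stieltjes_by_parts:
  assumes ab: "0 \<le> a" "a \<le> b" "b \<le> 1"
    and f': "\<And>x. x \<in> {a..b} \<Longrightarrow> (f has_real_derivative f' x) (at x within {a..b})"
    and cf': "continuous_on {a..b} f'" and K: "\<And>x. x \<in> {a..b} \<Longrightarrow> \<bar>f x\<bar> \<le> K"
  shows "subgaussian (\<lambda>\<omega>. f b * W b \<omega> - f a * W a \<omega> - integral {a..b} (\<lambda>r. W r \<omega> * f' r))
    (K\<^sup>2 * (b - a))"
proof -
  let ?S = "\<lambda>n \<omega>. \<Sum>i<n. f (unif_pt a b n i) * (W (unif_pt a b n (Suc i)) \<omega> - W (unif_pt a b n i) \<omega>)"
  let ?J = "\<lambda>\<omega>. f b * W b \<omega> - f a * W a \<omega> - integral {a..b} (\<lambda>r. W r \<omega> * f' r)"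
  note S = W_stieltjes_sum_exp_integral[OF ab K]
  have lim: "(\<lambda>n. ?S n \<omega>) \<longlonglongrightarrow> ?J \<omega>" if "\<omega> \<in> space M" for \<omega>
  proof -
    have "continuous_on {a..b} (\<lambda>r. W r \<omega>)"
      by (rule continuous_on_subset[OF W_continuous_on[OF that]]) (use ab in auto)
    from stieltjes_sum_tendsto_by_parts[OF ab(2) f' cf' this] show ?thesis .
  qed
  have "integrable M (\<lambda>\<omega>. exp (l * ?J \<omega>))" "(\<integral>\<omega>. exp (l * ?J \<omega>) \<partial>M) \<le> exp (l\<^sup>2 * (K\<^sup>2 * (b - a)) / 2)"
    for l
  proof -
    have m: "(\<lambda>\<omega>. exp (l * ?S n \<omega>)) \<in> borel_measurable M" for n
      using measurable_compose[OF borel_measurable_times[OF borel_measurable_const S(1)] borel_measurable_exp]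
      by (simp add: comp_def)
    have t: "(\<lambda>n. exp (l * ?S n \<omega>)) \<longlonglongrightarrow> exp (l * ?J \<omega>)" if "\<omega> \<in> space M" for \<omega>
      using lim[OF that] by (intro tendsto_exp tendsto_mult_left)
    have p: "0 \<le> exp (l * ?S n \<omega>)" if "\<omega> \<in> space M" for n \<omega>
      by simp
    show "integrable M (\<lambda>\<omega>. exp (l * ?J \<omega>))"
      "(\<integral>\<omega>. exp (l * ?J \<omega>) \<partial>M) \<le> exp (l\<^sup>2 * (K\<^sup>2 * (b - a)) / 2)"
      using integrable_limit_integral_le[where f = "\<lambda>n \<omega>. exp (l * ?S n \<omega>)"
          and g = "\<lambda>\<omega>. exp (l * ?J \<omega>)", OF m p t S(2) S(3)] by simp_all
  qed
  moreover have "?J \<in> borel_measurable M"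
    by (rule borel_measurable_LIMSEQ_metric[OF S(1) lim])
  ultimately show ?thesis
    unfolding subgaussian_def by blast
qed

end

section \<open>The forward variance process\<close>

lemma continuous_on_integral_shift:
  fixes g w :: "real \<Rightarrow> real"
  assumes t: "0 \<le> t" "t \<le> 1" and g: "continuous_on {0..1} g" and w: "continuous_on {0..t} w"
  shows "continuous_on {t..1} (\<lambda>u. integral {0..t} (\<lambda>r. w r * g (u - r)))"
proof -
  have "(\<lambda>p. fst p - snd p) ` ({t..1} \<times> {0..t}) \<subseteq> {0..1}"
    using t by auto
  then have "continuous_on ({t..1} \<times> {0..t}) (\<lambda>p. w (snd p) * g (fst p - snd p))"
    by (intro continuous_intros continuous_on_compose2[OF w] continuous_on_compose2[OF g]) auto
  then have "continuous_on ({t..1} \<times> cbox 0 t) (\<lambda>(u, r). w r * g (u - r))"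
    by (simp add: case_prod_beta')
  from integral_continuous_on_param[OF this] show ?thesis
    by simp
qed

locale forward_variance = brownian M F W for M :: "'a measure" and F W +
  fixes k :: "'q \<Rightarrow> real \<Rightarrow> real" and \<theta> :: 'q and V0 :: "real \<Rightarrow> real"
    and k' :: "real \<Rightarrow> real" and K Vmax :: real
  assumes k_deriv: "\<And>x. x \<in> {0..1} \<Longrightarrow> (k \<theta> has_real_derivative k' x) (at x)"
    and k'_continuous_on: "continuous_on {0..1} k'"
    and k_bound: "\<And>x. x \<in> {0..1} \<Longrightarrow> \<bar>k \<theta> x\<bar> \<le> K"
    and V0_continuous_on: "continuous_on {0..1} V0"
    and V0_pos: "\<And>u. u \<in> {0..1} \<Longrightarrow> 0 < V0 u"
    and V0_le: "\<And>u. u \<in> {0..1} \<Longrightarrow> V0 u \<le> Vmax"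
begin

abbreviation V :: "real \<Rightarrow> real \<Rightarrow> 'a \<Rightarrow> real" where
  "V t u \<omega> \<equiv> Vproc k \<theta> V0 W t u \<omega>"

abbreviation I :: "real \<Rightarrow> real \<Rightarrow> 'a \<Rightarrow> real" where
  "I t T \<omega> \<equiv> Iproc k \<theta> V0 W t T \<omega>"

text \<open>The Wiener integral \<open>\<integral>\<^sub>a\<^sup>b k \<theta> (u - r) dW\<^sub>r\<close>, integrated by parts so that it is defined
  path by path.\<close>
definition wiener_integral :: "real \<Rightarrow> real \<Rightarrow> real \<Rightarrow> 'a \<Rightarrow> real" where
  "wiener_integral u a b \<omega> =
     k \<theta> (u - b) * W b \<omega> - k \<theta> (u - a) * W a \<omega> - integral {a..b} (\<lambda>r. W r \<omega> * - k' (u - r))"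

definition wiener_variance :: "real \<Rightarrow> real \<Rightarrow> real" where
  "wiener_variance u t = integral {0..t} (\<lambda>s. (kext k \<theta> (u - s))\<^sup>2)"

lemma k_continuous_on: "continuous_on {0..1} (k \<theta>)"
  using k_deriv by (meson DERIV_continuous continuous_at_imp_continuous_on)

lemma Vmax_pos: "0 < Vmax"
  using V0_pos[of 0] V0_le[of 0] by auto

lemma k_shift_has_derivative:
  assumes "0 \<le> a" "b \<le> u" "u \<le> 1" "x \<in> {a..b}"
  shows "((\<lambda>r. k \<theta> (u - r)) has_real_derivative - k' (u - x)) (at x within {a..b})"
proof -
  have "((\<lambda>r. k \<theta> (u - r)) has_real_derivative k' (u - x) * (- 1)) (at x)"
    using assms by (intro DERIV_chain2[OF k_deriv] derivative_eq_intros) auto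
  then show ?thesis
    by (simp add: has_field_derivative_at_within)
qed

lemma k'_shift_continuous_on:
  assumes "0 \<le> a" "b \<le> u" "u \<le> 1"
  shows "continuous_on {a..b} (\<lambda>r. - k' (u - r))"
  using assms by (intro continuous_intros continuous_on_compose2[OF k'_continuous_on]) auto

lemma subgaussian_wiener_integral:
  assumes "0 \<le> a" "a \<le> b" "b \<le> u" "u \<le> 1"
  shows "subgaussian (wiener_integral u a b) (K\<^sup>2 * (b - a))"
proof -
  have "\<bar>k \<theta> (u - x)\<bar> \<le> K" if "x \<in> {a..b}" for x
    using assms that by (intro k_bound) auto
  from subgaussian_stieltjes_by_parts[OF _ _ _ k_shift_has_derivative k'_shift_continuous_on this]
  show ?thesis
    using assms unfolding wiener_integral_def[abs_def] by auto
qed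

lemma ito_det_eq_wiener_integral:
  assumes "0 \<le> t" "t \<le> u" "u \<le> 1" "\<omega> \<in> space M"
  shows "ito_det (\<lambda>s. kext k \<theta> (u - s)) W t \<omega> = wiener_integral u 0 t \<omega>"
proof -
  have "continuous_on {0..t} (\<lambda>r. W r \<omega>)"
    by (rule continuous_on_subset[OF W_continuous_on[OF assms(4)]]) (use assms in auto)
  from stieltjes_sum_tendsto_by_parts[OF assms(1) k_shift_has_derivative k'_shift_continuous_on this]
  have lim: "(\<lambda>n. \<Sum>i<n. k \<theta> (u - unif_pt 0 t n i) * (W (unif_pt 0 t n (Suc i)) \<omega> - W (unif_pt 0 t n i) \<omega>))
      \<longlonglongrightarrow> wiener_integral u 0 t \<omega>"
    using assms unfolding wiener_integral_def by simp
  have "kext k \<theta> (u - t * real i / real n) = k \<theta> (u - unif_pt 0 t n i)" if "i < n" for n i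
    using unif_pt_in_Icc[of 0 t i n] assms that unfolding kext_def by (auto simp: unif_pt_def)
  then have "(\<Sum>i<n. kext k \<theta> (u - t * real i / real n) *
        (W (t * real (Suc i) / real n) \<omega> - W (t * real i / real n) \<omega>))
      = (\<Sum>i<n. k \<theta> (u - unif_pt 0 t n i) * (W (unif_pt 0 t n (Suc i)) \<omega> - W (unif_pt 0 t n i) \<omega>))" for n
    by (intro sum.cong) (auto simp: unif_pt_def)
  then show ?thesis
    unfolding ito_det_def using lim by (simp add: limI)
qed

lemma wiener_integral_diff:
  assumes "0 \<le> s" "s \<le> t" "t \<le> u" "u \<le> 1" "\<omega> \<in> space M"
  shows "wiener_integral u 0 t \<omega> - wiener_integral u 0 s \<omega> = wiener_integral u s t \<omega>"
proof -
  have "continuous_on {0..t} (\<lambda>r. W r \<omega> * - k' (u - r))"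
    using assms by (intro continuous_intros k'_shift_continuous_on[of 0 t u]
        continuous_on_subset[OF W_continuous_on]) auto
  from Henstock_Kurzweil_Integration.integral_combine[OF assms(1,2) integrable_continuous_real[OF this]]
  show ?thesis
    unfolding wiener_integral_def by simp
qed

lemma k_shift_sq_continuous_on:
  assumes "0 \<le> a" "b \<le> u" "u \<le> 1"
  shows "continuous_on {a..b} (\<lambda>s. (k \<theta> (u - s))\<^sup>2)"
  using assms by (intro continuous_intros continuous_on_compose2[OF k_continuous_on]) auto

lemma wiener_variance_eq:
  assumes "0 \<le> t" "t \<le> u"
  shows "wiener_variance u t = integral {0..t} (\<lambda>s. (k \<theta> (u - s))\<^sup>2)"
  unfolding wiener_variance_def by (rule integral_cong) (use assms in \<open>auto simp: kext_def\<close>)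

lemma wiener_variance_diff:
  assumes "0 \<le> s" "s \<le> t" "t \<le> u" "u \<le> 1"
  shows "0 \<le> wiener_variance u t - wiener_variance u s"
    "wiener_variance u t - wiener_variance u s \<le> K\<^sup>2 * (t - s)"
proof -
  have c: "continuous_on {0..t} (\<lambda>s. (k \<theta> (u - s))\<^sup>2)" "continuous_on {s..t} (\<lambda>s. (k \<theta> (u - s))\<^sup>2)"
    using assms by (auto intro!: k_shift_sq_continuous_on)
  have eq: "wiener_variance u t - wiener_variance u s = integral {s..t} (\<lambda>s. (k \<theta> (u - s))\<^sup>2)"
    using Henstock_Kurzweil_Integration.integral_combine[OF assms(1,2) integrable_continuous_real[OF c(1)]]
      wiener_variance_eq[of t u] wiener_variance_eq[of s u] assms by simp
  show "0 \<le> wiener_variance u t - wiener_variance u s"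
    unfolding eq by (rule integral_nonneg[OF integrable_continuous_real[OF c(2)]]) auto
  have "\<bar>k \<theta> (u - r)\<bar>\<^sup>2 \<le> K\<^sup>2" if "r \<in> {s..t}" for r
    using assms that k_bound[of "u - r"] by (intro power_mono) auto
  then have "norm (integral {s..t} (\<lambda>s. (k \<theta> (u - s))\<^sup>2)) \<le> K\<^sup>2 * (t - s)"
    by (intro integral_bound[OF assms(2) c(2)]) simp
  then show "wiener_variance u t - wiener_variance u s \<le> K\<^sup>2 * (t - s)"
    unfolding eq by simp
qed

lemma wiener_variance_nonneg:
  assumes "0 \<le> t" "t \<le> u" "u \<le> 1"
  shows "0 \<le> wiener_variance u t"
  using wiener_variance_diff(1)[of 0 t u] assms by (simp add: wiener_variance_def)

lemma Vproc_eq: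
  assumes "0 \<le> t" "t \<le> u" "u \<le> 1" "\<omega> \<in> space M"
  shows "V t u \<omega> = V0 u * exp (wiener_integral u 0 t \<omega> - 1/2 * wiener_variance u t)"
  unfolding Vproc_def wiener_variance_def using ito_det_eq_wiener_integral[OF assms] assms by simp

lemma Vproc_measurable:
  assumes "0 \<le> t" "t \<le> 1" "u \<le> 1"
  shows "(\<lambda>\<omega>. V t u \<omega>) \<in> borel_measurable M"
proof (cases "t \<le> u")
  case True
  have "wiener_integral u 0 t \<in> borel_measurable M"
    using subgaussian_wiener_integral[of 0 t u] assms True unfolding subgaussian_def by simp
  then have "(\<lambda>\<omega>. V0 u * exp (wiener_integral u 0 t \<omega> - 1/2 * wiener_variance u t)) \<in> borel_measurable M"
    by measurable
  then show ?thesis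
    by (rule measurable_cong[THEN iffD1, rotated]) (use Vproc_eq assms True in auto)
qed (simp add: Vproc_def)

lemma Vproc_nonneg: "u \<in> {0..1} \<Longrightarrow> 0 \<le> V t u \<omega>"
  unfolding Vproc_def using V0_pos by (simp add: less_imp_le)

lemma Vproc_continuous_on:
  assumes "0 \<le> t" "t \<le> 1" "\<omega> \<in> space M"
  shows "continuous_on {t..1} (\<lambda>u. V t u \<omega>)"
proof -
  let ?f = "\<lambda>u. V0 u * exp ((k \<theta> (u - t) * W t \<omega> - k \<theta> (u - 0) * W 0 \<omega>
       - integral {0..t} (\<lambda>r. W r \<omega> * (\<lambda>x. - k' x) (u - r)))
       - 1/2 * integral {0..t} (\<lambda>r. 1 * (\<lambda>x. (k \<theta> x)\<^sup>2) (u - r)))"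
  have "V t u \<omega> = ?f u" if "u \<in> {t..1}" for u
    using Vproc_eq[of t u \<omega>] wiener_variance_eq[of t u] assms that
    unfolding wiener_integral_def by simp
  moreover have "continuous_on {t..1} ?f"
  proof -
    have "continuous_on {t..1} (\<lambda>u. k \<theta> (u - c))" if "c \<in> {0..t}" for c
      using assms that by (intro continuous_on_compose2[OF k_continuous_on] continuous_intros) auto
    moreover have "continuous_on {0..t} (\<lambda>r. W r \<omega>)"
      by (rule continuous_on_subset[OF W_continuous_on[OF assms(3)]]) (use assms in auto)
    moreover have "continuous_on {t..1} (k \<theta>)"
      by (rule continuous_on_subset[OF k_continuous_on]) (use assms in auto)
    ultimately show ?thesis
      using assms
      by (intro continuous_intros continuous_on_subset[OF V0_continuous_on]
          continuous_on_integral_shift k_continuous_on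
          k'_continuous_on) auto
  qed
  ultimately show ?thesis
    using continuous_on_cong[of "{t..1}" "{t..1}" "\<lambda>u. V t u \<omega>" ?f] by blast
qed

definition V_moment_bound :: "nat \<Rightarrow> real" where
  "V_moment_bound N = Vmax ^ N * exp ((real N)\<^sup>2 * K\<^sup>2 / 2)"

definition V_increment_bound :: "nat \<Rightarrow> real" where
  "V_increment_bound m = (V_moment_bound (4 * m) + exp_minus_one_moment_const (4 * m) K (K\<^sup>2 / 2)) / 2"

lemma V_moment_bound_nonneg: "0 \<le> V_moment_bound N"
  unfolding V_moment_bound_def using Vmax_pos by simp

lemma V_increment_bound_nonneg: "0 \<le> V_increment_bound m"
  unfolding V_increment_bound_def exp_minus_one_moment_const_def using V_moment_bound_nonneg by simp

lemma Vproc_moment: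
  assumes "0 \<le> t" "t \<le> u" "u \<le> 1"
  shows "integrable M (\<lambda>\<omega>. V t u \<omega> ^ N)" "(\<integral>\<omega>. V t u \<omega> ^ N \<partial>M) \<le> V_moment_bound N"
proof -
  have J: "wiener_integral u 0 t \<in> borel_measurable M"
    "integrable M (\<lambda>\<omega>. exp (real N * wiener_integral u 0 t \<omega>))"
    "(\<integral>\<omega>. exp (real N * wiener_integral u 0 t \<omega>) \<partial>M) \<le> exp ((real N)\<^sup>2 * (K\<^sup>2 * t) / 2)"
    using subgaussian_wiener_integral[of 0 t u] assms unfolding subgaussian_def by auto
  have u: "u \<in> {0..1}"
    using assms by auto
  have pw: "V t u \<omega> ^ N \<le> Vmax ^ N * exp (real N * wiener_integral u 0 t \<omega>)" if "\<omega> \<in> space M" for \<omega>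
  proof -
    have "V t u \<omega> ^ N = V0 u ^ N * exp (real N * wiener_integral u 0 t \<omega> - real N / 2 * wiener_variance u t)"
      using Vproc_eq[OF assms that] by (simp add: power_mult_distrib exp_of_nat_mult[symmetric] algebra_simps)
    also have "\<dots> \<le> Vmax ^ N * exp (real N * wiener_integral u 0 t \<omega>)"
      using V0_pos[OF u] V0_le[OF u] wiener_variance_nonneg[OF assms]
      by (intro mult_mono power_mono) auto
    finally show ?thesis .
  qed
  have Ri: "integrable M (\<lambda>\<omega>. Vmax ^ N * exp (real N * wiener_integral u 0 t \<omega>))"
    using J by simp
  have "(\<lambda>\<omega>. V t u \<omega> ^ N) \<in> borel_measurable M"
    using Vproc_measurable[of t u] assms by auto
  then show "integrable M (\<lambda>\<omega>. V t u \<omega> ^ N)"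
    using Vproc_nonneg[OF u] pw by (intro integrable_dominated_nonneg[OF Ri]) auto
  have "(\<integral>\<omega>. V t u \<omega> ^ N \<partial>M) \<le> (\<integral>\<omega>. Vmax ^ N * exp (real N * wiener_integral u 0 t \<omega>) \<partial>M)"
    using pw Vmax_pos by (intro integral_mono'[OF Ri]) auto
  also have "\<dots> = Vmax ^ N * (\<integral>\<omega>. exp (real N * wiener_integral u 0 t \<omega>) \<partial>M)"
    by simp
  also have "\<dots> \<le> Vmax ^ N * exp ((real N)\<^sup>2 * K\<^sup>2 / 2)"
    using J(3) Vmax_pos assms mult_left_mono[of t 1 "(real N)\<^sup>2 * K\<^sup>2"]
    by (intro mult_left_mono order_trans[OF J(3)]) auto
  finally show "(\<integral>\<omega>. V t u \<omega> ^ N \<partial>M) \<le> V_moment_bound N"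
    unfolding V_moment_bound_def .
qed

lemma Vproc_eq_mult_exp:
  assumes "0 \<le> s" "s \<le> t" "t \<le> u" "u \<le> 1" "\<omega> \<in> space M"
  shows "V t u \<omega> = V s u \<omega> * exp (wiener_integral u s t \<omega> - (wiener_variance u t - wiener_variance u s) / 2)"
proof -
  have "wiener_integral u 0 t \<omega> - 1/2 * wiener_variance u t
      = (wiener_integral u 0 s \<omega> - 1/2 * wiener_variance u s)
        + (wiener_integral u s t \<omega> - (wiener_variance u t - wiener_variance u s) / 2)"
    using wiener_integral_diff[OF assms] by (simp add: field_simps)
  then show ?thesis
    using Vproc_eq[of t u \<omega>] Vproc_eq[of s u \<omega>] assms by (simp add: exp_add)
qed

lemma Vproc_increment_pow_le:
  assumes st: "0 \<le> s" "s \<le> t" "t \<le> u" "u \<le> 1" and \<omega>: "\<omega> \<in> space M" and e: "0 < e"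
  defines "X \<equiv> exp (wiener_integral u s t \<omega> - (wiener_variance u t - wiener_variance u s) / 2) - 1"
  shows "(V t u \<omega> - V s u \<omega>) ^ (2 * m) \<le> e / 2 * V s u \<omega> ^ (4 * m) + 1 / (2 * e) * \<bar>X\<bar> ^ (4 * m)"
proof -
  have "V t u \<omega> - V s u \<omega> = V s u \<omega> * X"
    using Vproc_eq_mult_exp[OF st \<omega>] unfolding X_def by (simp add: right_diff_distrib)
  then have "(V t u \<omega> - V s u \<omega>) ^ (2 * m) = V s u \<omega> ^ (2 * m) * \<bar>X\<bar> ^ (2 * m)"
    by (simp only: power_mult_distrib power_even_abs even_mult_iff even_numeral simp_thms)
  moreover have "4 * m = 2 * m * 2"
    by simp
  then have "(x ^ (2 * m))\<^sup>2 = x ^ (4 * m)" for x :: real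
    by (simp only: power_mult)
  ultimately show ?thesis
    using mult_le_weighted_squares[OF e, of "V s u \<omega> ^ (2 * m)" "\<bar>X\<bar> ^ (2 * m)"] by simp
qed

text \<open>Young's inequality with weight \<open>e = (t - s)\<^sup>m\<close> separates \<open>V\<^sub>s\<^sup>u\<close> from the factor
  \<open>exp(\<dots>) - 1\<close>, whose \<open>4 m\<close>-th moment is of order \<open>(t - s)\<^sup>2\<^sup>m\<close>.\<close>
lemma Vproc_increment_moment:
  assumes st: "0 \<le> s" "s \<le> t" "t \<le> u" "u \<le> 1" and m: "1 \<le> m"
  shows "integrable M (\<lambda>\<omega>. (V t u \<omega> - V s u \<omega>) ^ (2 * m))"
    "(\<integral>\<omega>. (V t u \<omega> - V s u \<omega>) ^ (2 * m) \<partial>M) \<le> V_increment_bound m * (t - s) ^ m"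
proof -
  let ?D = "\<lambda>\<omega>. (V t u \<omega> - V s u \<omega>) ^ (2 * m)"
  have "integrable M ?D \<and> (\<integral>\<omega>. ?D \<omega> \<partial>M) \<le> V_increment_bound m * (t - s) ^ m"
  proof (cases "s = t")
    case True
    then show ?thesis
      using m by (simp add: power_0_left)
  next
    case False
    define \<sigma> \<delta> e where "\<sigma> = sqrt (t - s)" and "\<delta> = (wiener_variance u t - wiener_variance u s) / 2"
      and "e = (t - s) ^ m"
    have \<sigma>: "0 < \<sigma>" "\<sigma> \<le> 1" "\<sigma>\<^sup>2 = t - s" and \<delta>: "0 \<le> \<delta>" "\<delta> \<le> K\<^sup>2 / 2 * \<sigma>\<^sup>2"
      unfolding \<sigma>_def \<delta>_def using st False wiener_variance_diff[OF st] by auto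
    have "\<sigma> ^ (4 * m) = (\<sigma>\<^sup>2) ^ (2 * m)"
      unfolding power_mult[symmetric] by (simp add: mult.commute)
    then have e: "0 < e" "\<sigma> ^ (4 * m) = e * e"
      unfolding e_def \<sigma>(3) using st False by (simp_all add: mult_2 power_add)
    have "subgaussian (wiener_integral u s t) (K\<^sup>2 * \<sigma>\<^sup>2)"
      using subgaussian_wiener_integral[OF st] unfolding \<sigma>(3) .
    note X = subgaussian_exp_minus_one_moment[OF this \<sigma>(1,2) \<delta>, of "4 * m"]
    note Y = Vproc_moment[OF st(1) order_trans[OF st(2,3)] st(4), of "4 * m"]
    let ?R = "\<lambda>\<omega>. e / 2 * V s u \<omega> ^ (4 * m) + 1 / (2 * e) * \<bar>exp (wiener_integral u s t \<omega> - \<delta>) - 1\<bar> ^ (4 * m)"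
    have Ri: "integrable M ?R"
      using X(1) Y(1) by simp
    have "(\<lambda>\<omega>. V t u \<omega>) \<in> borel_measurable M" "(\<lambda>\<omega>. V s u \<omega>) \<in> borel_measurable M"
      using Vproc_measurable st by auto
    then have meas: "?D \<in> borel_measurable M"
      by measurable
    have dom: "0 \<le> ?D \<omega> \<and> ?D \<omega> \<le> ?R \<omega>" if "\<omega> \<in> space M" for \<omega>
      using Vproc_increment_pow_le[OF st that e(1)] unfolding \<delta>_def by simp
    have "(\<integral>\<omega>. ?R \<omega> \<partial>M) = e / 2 * (\<integral>\<omega>. V s u \<omega> ^ (4 * m) \<partial>M)
        + 1 / (2 * e) * (\<integral>\<omega>. \<bar>exp (wiener_integral u s t \<omega> - \<delta>) - 1\<bar> ^ (4 * m) \<partial>M)"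
      using X(1) Y(1) by simp
    also have "\<dots> \<le> e / 2 * V_moment_bound (4 * m)
        + 1 / (2 * e) * (exp_minus_one_moment_const (4 * m) K (K\<^sup>2 / 2) * \<sigma> ^ (4 * m))"
      using X(2) Y(2) e(1) by (intro add_mono mult_left_mono) auto
    also have "\<dots> = V_increment_bound m * (t - s) ^ m"
      unfolding e(2) V_increment_bound_def e_def[symmetric] using e(1) by (simp add: field_simps)
    finally show ?thesis
      using integrable_integral_le_dominated[OF Ri meas dom] by blast
  qed
  then show "integrable M ?D" "(\<integral>\<omega>. ?D \<omega> \<partial>M) \<le> V_increment_bound m * (t - s) ^ m"
    by auto
qed

lemma integral_Vproc_moment:
  assumes "0 \<le> t" "t \<le> a" "a \<le> b" "b \<le> 1"
  shows "(\<lambda>\<omega>. integral {a..b} (\<lambda>u. V t u \<omega>)) \<in> borel_measurable M"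
    "integrable M (\<lambda>\<omega>. integral {a..b} (\<lambda>u. V t u \<omega>) ^ (2 * m))"
    "(\<integral>\<omega>. integral {a..b} (\<lambda>u. V t u \<omega>) ^ (2 * m) \<partial>M) \<le> (b - a) ^ (2 * m) * V_moment_bound (2 * m)"
proof -
  have cont: "continuous_on {a..b} (\<lambda>u. V t u \<omega>)" if "\<omega> \<in> space M" for \<omega>
    using assms that by (intro continuous_on_subset[OF Vproc_continuous_on]) auto
  have meas: "(\<lambda>\<omega>. V t u \<omega>) \<in> borel_measurable M" if "u \<in> {a..b}" for u
    using assms that by (intro Vproc_measurable) auto
  have mom: "integrable M (\<lambda>\<omega>. V t u \<omega> ^ (2 * m))"
    "(\<integral>\<omega>. V t u \<omega> ^ (2 * m) \<partial>M) \<le> V_moment_bound (2 * m)" if "u \<in> {a..b}" for u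
    using Vproc_moment[of t u "2 * m"] assms that by auto
  show "(\<lambda>\<omega>. integral {a..b} (\<lambda>u. V t u \<omega>)) \<in> borel_measurable M"
    "integrable M (\<lambda>\<omega>. integral {a..b} (\<lambda>u. V t u \<omega>) ^ (2 * m))"
    "(\<integral>\<omega>. integral {a..b} (\<lambda>u. V t u \<omega>) ^ (2 * m) \<partial>M) \<le> (b - a) ^ (2 * m) * V_moment_bound (2 * m)"
    using integral_path_moment_le[OF assms(3) cont meas mom] by auto
qed

lemma integral_Vproc_increment_moment:
  assumes "0 \<le> s" "s \<le> t" "t \<le> a" "a \<le> b" "b \<le> 1" "1 \<le> m"
  shows "(\<lambda>\<omega>. integral {a..b} (\<lambda>u. V t u \<omega> - V s u \<omega>)) \<in> borel_measurable M"
    "integrable M (\<lambda>\<omega>. integral {a..b} (\<lambda>u. V t u \<omega> - V s u \<omega>) ^ (2 * m))"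
    "(\<integral>\<omega>. integral {a..b} (\<lambda>u. V t u \<omega> - V s u \<omega>) ^ (2 * m) \<partial>M)
       \<le> (b - a) ^ (2 * m) * (V_increment_bound m * (t - s) ^ m)"
proof -
  have cont: "continuous_on {a..b} (\<lambda>u. V t u \<omega> - V s u \<omega>)" if "\<omega> \<in> space M" for \<omega>
    using assms that by (intro continuous_intros continuous_on_subset[OF Vproc_continuous_on]) auto
  have meas: "(\<lambda>\<omega>. V t u \<omega> - V s u \<omega>) \<in> borel_measurable M" if "u \<in> {a..b}" for u
    using assms that Vproc_measurable[of t u] Vproc_measurable[of s u] by auto
  have mom: "integrable M (\<lambda>\<omega>. (V t u \<omega> - V s u \<omega>) ^ (2 * m))"
    "(\<integral>\<omega>. (V t u \<omega> - V s u \<omega>) ^ (2 * m) \<partial>M) \<le> V_increment_bound m * (t - s) ^ m"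
    if "u \<in> {a..b}" for u
    using Vproc_increment_moment[of s t u m] assms that by auto
  show "(\<lambda>\<omega>. integral {a..b} (\<lambda>u. V t u \<omega> - V s u \<omega>)) \<in> borel_measurable M"
    "integrable M (\<lambda>\<omega>. integral {a..b} (\<lambda>u. V t u \<omega> - V s u \<omega>) ^ (2 * m))"
    "(\<integral>\<omega>. integral {a..b} (\<lambda>u. V t u \<omega> - V s u \<omega>) ^ (2 * m) \<partial>M)
       \<le> (b - a) ^ (2 * m) * (V_increment_bound m * (t - s) ^ m)"
    using integral_path_moment_le[OF assms(4) cont meas mom] by auto
qed

lemma Vproc_integrable_on:
  assumes "0 \<le> t" "t \<le> a" "b \<le> 1" "\<omega> \<in> space M"
  shows "(\<lambda>u. V t u \<omega>) integrable_on {a..b}"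
proof (cases "a \<le> b")
  case True
  then show ?thesis
    using assms by (intro integrable_continuous_real continuous_on_subset[OF Vproc_continuous_on]) auto
qed (simp add: integrable_on_empty)

lemma Iproc_eq_integral: "I t T \<omega> = integral {t..T} (\<lambda>u. V t u \<omega>)"
  unfolding Iproc_def by (simp add: integral_unique[OF has_integral_null_real] content_real_eq_0)

lemma Iproc_measurable:
  assumes "0 \<le> t" "t \<le> 1" "T \<le> 1"
  shows "(\<lambda>\<omega>. I t T \<omega>) \<in> borel_measurable M"
proof (cases "t < T")
  case True
  then show ?thesis
    using integral_Vproc_moment(1)[of t t T] assms unfolding Iproc_eq_integral by simp
qed (simp add: Iproc_def)

end

section \<open>Increments of the integrated variance on grid cells\<close>

text \<open>The length of \<open>[a, b] \<inter> [s, t]\<close>, for \<open>a \<le> b\<close> and \<open>s \<le> t\<close>.\<close>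
definition overlap_length :: "real \<Rightarrow> real \<Rightarrow> real \<Rightarrow> real \<Rightarrow> real" where
  "overlap_length s t a b = max s (min t b) - max s (min t a)"

lemma overlap_length_nonneg: "a \<le> b \<Longrightarrow> 0 \<le> overlap_length s t a b"
  unfolding overlap_length_def by auto

lemma overlap_length_le: "s \<le> t \<Longrightarrow> overlap_length s t a b \<le> t - s"
  unfolding overlap_length_def by auto

lemma sum_Icc_telescope: "(\<Sum>l\<in>{1..j}. f l - f (l - 1)) = f j - f 0" for f :: "nat \<Rightarrow> real"
  by (induction j) (auto simp: atLeastAtMostSuc_conv)

lemma grid_le:
  assumes g: "grid d Tg" and l: "l \<in> {1..j}" and j: "j \<le> d"
  shows "0 \<le> Tg (l - 1)" "Tg (l - 1) < Tg l" "Tg l \<le> 1"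
proof -
  have inc: "\<And>i. i < d \<Longrightarrow> Tg i \<le> Tg (Suc i)"
    using g unfolding grid_def by (auto intro: less_imp_le)
  show "0 \<le> Tg (l - 1)" "Tg l \<le> 1"
    using chain_le[of d Tg 0 "l - 1", OF inc] chain_le[of d Tg l d, OF inc] g l j unfolding grid_def by auto
  have "l - 1 < d"
    using l j by auto
  then have "Tg (l - 1) < Tg (Suc (l - 1))"
    using g unfolding grid_def by blast
  then show "Tg (l - 1) < Tg l"
    using l by simp
qed

lemma sum_overlap_length_le:
  fixes Tg :: "nat \<Rightarrow> real"
  assumes "s \<le> t"
  shows "(\<Sum>l\<in>{1..j}. overlap_length s t (Tg (l - 1)) (Tg l)) \<le> t - s"
  using sum_Icc_telescope[of "\<lambda>l. max s (min t (Tg l))" j] assms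
  unfolding overlap_length_def by auto

text \<open>With \<open>\<sigma> = \<surd>(t - s)\<close>, these weights sum to at most \<open>2 \<sigma>\<close> whatever the number of grid
  points; this is what makes the bounds on \<open>\<sigma>\<^sup>j\<close> independent of \<open>j\<close>.\<close>
lemma grid_overlap_weights:
  fixes Tg :: "nat \<Rightarrow> real"
  assumes g: "grid d Tg" and j: "j \<le> d" and \<sigma>: "0 < \<sigma>" "\<sigma> \<le> 1" "\<sigma>\<^sup>2 = t - s"
  defines "w \<equiv> \<lambda>l. (Tg l - Tg (l - 1)) * \<sigma> + overlap_length s t (Tg (l - 1)) (Tg l)"
  shows "\<And>l. l \<in> {1..j} \<Longrightarrow> 0 < w l"
    "\<And>l. l \<in> {1..j} \<Longrightarrow> (Tg l - Tg (l - 1))\<^sup>2 * (t - s) + overlap_length s t (Tg (l - 1)) (Tg l) ^ 2 \<le> (w l)\<^sup>2"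
    "(\<Sum>l\<in>{1..j}. w l) \<le> 2 * \<sigma>"
proof -
  note gl = grid_le[OF g _ j]
  fix l
  assume l: "l \<in> {1..j}"
  have pos: "0 < (Tg l - Tg (l - 1)) * \<sigma>" "0 \<le> overlap_length s t (Tg (l - 1)) (Tg l)"
    using gl[OF l] \<sigma> overlap_length_nonneg[of "Tg (l - 1)" "Tg l" s t] by auto
  then show "0 < w l"
    unfolding w_def by simp
  have "0 \<le> 2 * ((Tg l - Tg (l - 1)) * \<sigma>) * overlap_length s t (Tg (l - 1)) (Tg l)"
    using pos by simp
  then show "(Tg l - Tg (l - 1))\<^sup>2 * (t - s) + overlap_length s t (Tg (l - 1)) (Tg l) ^ 2 \<le> (w l)\<^sup>2"
    unfolding w_def \<sigma>(3)[symmetric] by (simp add: power2_eq_square algebra_simps)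
next
  have "Tg j \<le> 1"
    using grid_le[OF g _ j, of j] g by (cases "j = 0") (auto simp: grid_def)
  moreover have "s \<le> t"
    using \<sigma>(3) zero_le_power2[of \<sigma>] by linarith
  ultimately have "\<sigma> * (Tg j - Tg 0) + (\<Sum>l\<in>{1..j}. overlap_length s t (Tg (l - 1)) (Tg l)) \<le> \<sigma> * 1 + \<sigma>\<^sup>2"
    using sum_overlap_length_le[where Tg = Tg and j = j] g \<sigma> by (intro add_mono mult_left_mono) (auto simp: grid_def)
  also have "\<sigma> * 1 + \<sigma>\<^sup>2 \<le> 2 * \<sigma>"
    using mult_left_le_one_le[of \<sigma> \<sigma>] \<sigma>(1,2) by (simp add: power2_eq_square)
  finally show "(\<Sum>l\<in>{1..j}. w l) \<le> 2 * \<sigma>"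
    unfolding w_def sum.distrib sum_Icc_telescope[of Tg, symmetric] by (simp add: sum_distrib_left mult_ac)
qed

context forward_variance
begin

lemma Iproc_eq_0: "T \<le> t \<Longrightarrow> I t T \<omega> = 0"
  unfolding Iproc_def by simp

lemma Iproc_diff_eq_integral:
  assumes "0 \<le> \<tau>" "a \<le> b" "b \<le> 1" "\<omega> \<in> space M"
  shows "I \<tau> b \<omega> - I \<tau> a \<omega> = integral {max \<tau> a..b} (\<lambda>u. V \<tau> u \<omega>)"
proof (cases "\<tau> < a")
  case True
  have "integral {\<tau>..a} (\<lambda>u. V \<tau> u \<omega>) + integral {a..b} (\<lambda>u. V \<tau> u \<omega>) = integral {\<tau>..b} (\<lambda>u. V \<tau> u \<omega>)"
    using True assms
    by (intro Henstock_Kurzweil_Integration.integral_combine Vproc_integrable_on) auto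
  then show ?thesis
    using True unfolding Iproc_eq_integral by simp
next
  case False
  then show ?thesis
    unfolding Iproc_eq_integral[of \<tau> b] by (simp add: Iproc_eq_0)
qed

text \<open>Unlike in \<^const>\<open>sigma_hat\<close>, the weight is not extended by zero to \<open>b < \<tau>\<close>: the
  increment of \<open>I\<close> vanishes there anyway.\<close>
definition sigma_term :: "(real \<Rightarrow> real) \<Rightarrow> real \<Rightarrow> real \<Rightarrow> real \<Rightarrow> 'a \<Rightarrow> real" where
  "sigma_term \<phi> a b \<tau> \<omega> = \<phi> (b - \<tau>) * (I \<tau> b \<omega> - I \<tau> a \<omega>)"

definition sigma_term_bound :: "nat \<Rightarrow> real \<Rightarrow> real \<Rightarrow> real" where
  "sigma_term_bound m K\<phi> L\<phi> = 3 ^ (2 * m) *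
     (L\<phi> ^ (2 * m) * V_moment_bound (2 * m) + K\<phi> ^ (2 * m) * (V_increment_bound m + V_moment_bound (2 * m)))"

lemma sigma_term_bound_nonneg: "0 \<le> K\<phi> \<Longrightarrow> 0 \<le> L\<phi> \<Longrightarrow> 0 \<le> sigma_term_bound m K\<phi> L\<phi>"
  unfolding sigma_term_bound_def using V_moment_bound_nonneg V_increment_bound_nonneg by simp

lemma sigma_term_measurable:
  assumes "0 \<le> \<tau>" "\<tau> \<le> 1" "a \<le> 1" "b \<le> 1"
  shows "sigma_term \<phi> a b \<tau> \<in> borel_measurable M"
  using Iproc_measurable[of \<tau> b] Iproc_measurable[of \<tau> a] assms
  unfolding sigma_term_def[abs_def] by measurable

lemma sigma_term_increment_eq:
  assumes st: "0 \<le> s" "s \<le> t" "t < b" and ab: "a \<le> b" "b \<le> 1" and \<omega>: "\<omega> \<in> space M"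
  shows "sigma_term \<phi> a b t \<omega> - sigma_term \<phi> a b s \<omega>
    = (\<phi> (b - t) - \<phi> (b - s)) * integral {max t a..b} (\<lambda>u. V t u \<omega>)
      + \<phi> (b - s) * integral {max t a..b} (\<lambda>u. V t u \<omega> - V s u \<omega>)
      + - \<phi> (b - s) * integral {max s a..max t a} (\<lambda>u. V s u \<omega>)"
proof -
  have A: "integral {max s a..b} (\<lambda>u. V s u \<omega>)
      = integral {max s a..max t a} (\<lambda>u. V s u \<omega>) + integral {max t a..b} (\<lambda>u. V s u \<omega>)"
    using st ab \<omega> by (intro Henstock_Kurzweil_Integration.integral_combine[symmetric] Vproc_integrable_on) auto
  have B: "integral {max t a..b} (\<lambda>u. V t u \<omega> - V s u \<omega>)
      = integral {max t a..b} (\<lambda>u. V t u \<omega>) - integral {max t a..b} (\<lambda>u. V s u \<omega>)"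
    using st ab \<omega> by (intro integral_diff Vproc_integrable_on) auto
  have D: "I t b \<omega> - I t a \<omega> = integral {max t a..b} (\<lambda>u. V t u \<omega>)"
    "I s b \<omega> - I s a \<omega> = integral {max s a..b} (\<lambda>u. V s u \<omega>)"
    using Iproc_diff_eq_integral[OF _ ab \<omega>] st by auto
  show ?thesis
    unfolding sigma_term_def D A B by (simp add: algebra_simps)
qed

lemma sigma_term_increment_pow_le:
  assumes st: "0 \<le> s" "s \<le> t" "t < b" and ab: "a \<le> b" "b \<le> 1" and \<omega>: "\<omega> \<in> space M"
    and K\<phi>: "\<And>x. x \<in> {0..1} \<Longrightarrow> \<bar>\<phi> x\<bar> \<le> K\<phi>" and L\<phi>: "L\<phi>-lipschitz_on {0..1} \<phi>"
  shows "(sigma_term \<phi> a b t \<omega> - sigma_term \<phi> a b s \<omega>) ^ (2 * m)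
    \<le> 3 ^ (2 * m) * (L\<phi> ^ (2 * m) * (t - s) ^ (2 * m) * integral {max t a..b} (\<lambda>u. V t u \<omega>) ^ (2 * m)
      + K\<phi> ^ (2 * m) * integral {max t a..b} (\<lambda>u. V t u \<omega> - V s u \<omega>) ^ (2 * m)
      + K\<phi> ^ (2 * m) * integral {max s a..max t a} (\<lambda>u. V s u \<omega>) ^ (2 * m))"
proof -
  let ?X = "integral {max t a..b} (\<lambda>u. V t u \<omega>)"
  have "\<bar>\<phi> (b - t) - \<phi> (b - s)\<bar> \<le> L\<phi> * (t - s)"
    using lipschitz_onD[OF L\<phi>, of "b - t" "b - s"] st ab by (simp add: dist_real_def)
  from power_even_mult_le[OF this, of ?X m]
  have "((\<phi> (b - t) - \<phi> (b - s)) * ?X) ^ (2 * m) \<le> L\<phi> ^ (2 * m) * (t - s) ^ (2 * m) * ?X ^ (2 * m)"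
    by (simp only: power_mult_distrib)
  moreover have "\<bar>\<phi> (b - s)\<bar> \<le> K\<phi>" "\<bar>- \<phi> (b - s)\<bar> \<le> K\<phi>"
    using K\<phi>[of "b - s"] st ab by auto
  ultimately show ?thesis
    unfolding sigma_term_increment_eq[OF st ab \<omega>]
    by (intro order_trans[OF power_even_add3_le] mult_left_mono add_mono power_even_mult_le) auto
qed

lemma sigma_term_bound_ge:
  assumes D: "0 \<le> D" "D \<le> 1" and r: "0 \<le> r" "r \<le> P" and Q: "0 \<le> Q"
  shows "3 ^ (2 * m) * (L\<phi> ^ (2 * m) * D ^ (2 * m) * (r ^ (2 * m) * V_moment_bound (2 * m))
      + K\<phi> ^ (2 * m) * (r ^ (2 * m) * (V_increment_bound m * D ^ m))
      + K\<phi> ^ (2 * m) * (Q ^ (2 * m) * V_moment_bound (2 * m)))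
    \<le> sigma_term_bound m K\<phi> L\<phi> * (P ^ (2 * m) * D ^ m + Q ^ (2 * m))"
  unfolding sigma_term_bound_def mult.assoc[of "3 ^ (2 * m)"]
proof (rule mult_left_mono)
  define C1 C2 Lm Km where "C1 = V_moment_bound (2 * m)" and "C2 = V_increment_bound m"
    and "Lm = L\<phi> ^ (2 * m)" and "Km = K\<phi> ^ (2 * m)"
  have nn: "0 \<le> C1" "0 \<le> C2" "0 \<le> Lm" "0 \<le> Km" "0 \<le> Q ^ (2 * m)" "0 \<le> P ^ (2 * m) * D ^ m"
    unfolding C1_def C2_def Lm_def Km_def using V_moment_bound_nonneg V_increment_bound_nonneg D r Q by auto
  have DD: "D ^ (2 * m) \<le> D ^ m" and rP: "r ^ (2 * m) \<le> P ^ (2 * m)"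
    using D r by (auto intro!: power_decreasing power_mono)
  have "Lm * D ^ (2 * m) * (r ^ (2 * m) * C1) \<le> Lm * D ^ m * (P ^ (2 * m) * C1)"
    using nn D r DD rP by (intro mult_mono) auto
  moreover have "Km * (r ^ (2 * m) * (C2 * D ^ m)) \<le> Km * (P ^ (2 * m) * (C2 * D ^ m))"
    using nn D rP by (intro mult_left_mono mult_right_mono) auto
  moreover have "0 \<le> Lm * C1 * Q ^ (2 * m)" "0 \<le> Km * C2 * Q ^ (2 * m)" "0 \<le> Km * C1 * (P ^ (2 * m) * D ^ m)"
    using nn by simp_all
  ultimately show "Lm * D ^ (2 * m) * (r ^ (2 * m) * C1) + Km * (r ^ (2 * m) * (C2 * D ^ m)) + Km * (Q ^ (2 * m) * C1)
      \<le> (Lm * C1 + Km * (C2 + C1)) * (P ^ (2 * m) * D ^ m + Q ^ (2 * m))"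
    by (simp add: algebra_simps)
qed simp

lemma sigma_term_increment_moment_interior:
  assumes ab: "0 \<le> a" "a \<le> b" "b \<le> 1" and st: "0 \<le> s" "s \<le> t" "t < b" and m: "1 \<le> m"
    and K\<phi>: "\<And>x. x \<in> {0..1} \<Longrightarrow> \<bar>\<phi> x\<bar> \<le> K\<phi>" and L\<phi>: "L\<phi>-lipschitz_on {0..1} \<phi>"
  shows "integrable M (\<lambda>\<omega>. (sigma_term \<phi> a b t \<omega> - sigma_term \<phi> a b s \<omega>) ^ (2 * m))"
    "(\<integral>\<omega>. (sigma_term \<phi> a b t \<omega> - sigma_term \<phi> a b s \<omega>) ^ (2 * m) \<partial>M)
      \<le> sigma_term_bound m K\<phi> L\<phi> * ((b - a) ^ (2 * m) * (t - s) ^ m + overlap_length s t a b ^ (2 * m))"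
proof -
  define \<alpha> \<beta> where "\<alpha> = max t a" and "\<beta> = max s a"
  have \<alpha>\<beta>: "s \<le> \<beta>" "\<beta> \<le> \<alpha>" "t \<le> \<alpha>" "\<alpha> \<le> b" "b - \<alpha> \<le> b - a" "overlap_length s t a b = \<alpha> - \<beta>"
    unfolding \<alpha>_def \<beta>_def overlap_length_def using ab st by auto
  let ?X1 = "\<lambda>\<omega>. integral {\<alpha>..b} (\<lambda>u. V t u \<omega>) ^ (2 * m)"
  let ?X2 = "\<lambda>\<omega>. integral {\<alpha>..b} (\<lambda>u. V t u \<omega> - V s u \<omega>) ^ (2 * m)"
  let ?X3 = "\<lambda>\<omega>. integral {\<beta>..\<alpha>} (\<lambda>u. V s u \<omega>) ^ (2 * m)"
  have X: "integrable M ?X1" "(\<integral>\<omega>. ?X1 \<omega> \<partial>M) \<le> (b - \<alpha>) ^ (2 * m) * V_moment_bound (2 * m)"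
    "integrable M ?X2" "(\<integral>\<omega>. ?X2 \<omega> \<partial>M) \<le> (b - \<alpha>) ^ (2 * m) * (V_increment_bound m * (t - s) ^ m)"
    "integrable M ?X3" "(\<integral>\<omega>. ?X3 \<omega> \<partial>M) \<le> (\<alpha> - \<beta>) ^ (2 * m) * V_moment_bound (2 * m)"
    using integral_Vproc_moment(2,3)[of t \<alpha> b m] integral_Vproc_increment_moment(2,3)[of s t \<alpha> b m]
      integral_Vproc_moment(2,3)[of s \<beta> \<alpha> m] \<alpha>\<beta> st ab m by auto
  let ?R = "\<lambda>\<omega>. 3 ^ (2 * m) * (L\<phi> ^ (2 * m) * (t - s) ^ (2 * m) * ?X1 \<omega> + K\<phi> ^ (2 * m) * ?X2 \<omega>
      + K\<phi> ^ (2 * m) * ?X3 \<omega>)"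
  have Ri: "integrable M ?R"
    using X(1,3,5) by simp
  have "(\<integral>\<omega>. ?R \<omega> \<partial>M) = 3 ^ (2 * m) * (L\<phi> ^ (2 * m) * (t - s) ^ (2 * m) * (\<integral>\<omega>. ?X1 \<omega> \<partial>M)
      + K\<phi> ^ (2 * m) * (\<integral>\<omega>. ?X2 \<omega> \<partial>M) + K\<phi> ^ (2 * m) * (\<integral>\<omega>. ?X3 \<omega> \<partial>M))"
    using X(1,3,5) by simp
  also have "\<dots> \<le> 3 ^ (2 * m) * (L\<phi> ^ (2 * m) * (t - s) ^ (2 * m) * ((b - \<alpha>) ^ (2 * m) * V_moment_bound (2 * m))
      + K\<phi> ^ (2 * m) * ((b - \<alpha>) ^ (2 * m) * (V_increment_bound m * (t - s) ^ m))
      + K\<phi> ^ (2 * m) * ((\<alpha> - \<beta>) ^ (2 * m) * V_moment_bound (2 * m)))"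
    using X(2,4,6) st by (intro mult_left_mono add_mono) auto
  also have "\<dots> \<le> sigma_term_bound m K\<phi> L\<phi> * ((b - a) ^ (2 * m) * (t - s) ^ m + overlap_length s t a b ^ (2 * m))"
    unfolding \<alpha>\<beta>(6) using \<alpha>\<beta> st ab by (intro sigma_term_bound_ge) auto
  finally have bound: "(\<integral>\<omega>. ?R \<omega> \<partial>M)
      \<le> sigma_term_bound m K\<phi> L\<phi> * ((b - a) ^ (2 * m) * (t - s) ^ m + overlap_length s t a b ^ (2 * m))" .
  have "sigma_term \<phi> a b t \<in> borel_measurable M" "sigma_term \<phi> a b s \<in> borel_measurable M"
    using sigma_term_measurable st ab by auto
  then have meas: "(\<lambda>\<omega>. (sigma_term \<phi> a b t \<omega> - sigma_term \<phi> a b s \<omega>) ^ (2 * m)) \<in> borel_measurable M"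
    by measurable
  have dom: "0 \<le> (sigma_term \<phi> a b t \<omega> - sigma_term \<phi> a b s \<omega>) ^ (2 * m)
      \<and> (sigma_term \<phi> a b t \<omega> - sigma_term \<phi> a b s \<omega>) ^ (2 * m) \<le> ?R \<omega>" if "\<omega> \<in> space M" for \<omega>
    using sigma_term_increment_pow_le[OF st ab(2,3) that K\<phi> L\<phi>, of m] unfolding \<alpha>_def \<beta>_def by simp
  from integrable_integral_le_dominated[OF Ri meas dom bound]
  show "integrable M (\<lambda>\<omega>. (sigma_term \<phi> a b t \<omega> - sigma_term \<phi> a b s \<omega>) ^ (2 * m))"
    "(\<integral>\<omega>. (sigma_term \<phi> a b t \<omega> - sigma_term \<phi> a b s \<omega>) ^ (2 * m) \<partial>M)
      \<le> sigma_term_bound m K\<phi> L\<phi> * ((b - a) ^ (2 * m) * (t - s) ^ m + overlap_length s t a b ^ (2 * m))"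
    by auto
qed

lemma sigma_term_increment_moment_boundary:
  assumes ab: "0 \<le> a" "a \<le> b" "b \<le> 1" and st: "0 \<le> s" "s < b" "b \<le> t" "t \<le> 1"
    and m: "1 \<le> m" and K\<phi>: "\<And>x. x \<in> {0..1} \<Longrightarrow> \<bar>\<phi> x\<bar> \<le> K\<phi>"
  shows "integrable M (\<lambda>\<omega>. (sigma_term \<phi> a b t \<omega> - sigma_term \<phi> a b s \<omega>) ^ (2 * m))"
    "(\<integral>\<omega>. (sigma_term \<phi> a b t \<omega> - sigma_term \<phi> a b s \<omega>) ^ (2 * m) \<partial>M)
      \<le> K\<phi> ^ (2 * m) * V_moment_bound (2 * m) * overlap_length s t a b ^ (2 * m)"
proof -
  let ?X = "\<lambda>\<omega>. integral {max s a..b} (\<lambda>u. V s u \<omega>)"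
  have X: "integrable M (\<lambda>\<omega>. ?X \<omega> ^ (2 * m))"
    "(\<integral>\<omega>. ?X \<omega> ^ (2 * m) \<partial>M) \<le> overlap_length s t a b ^ (2 * m) * V_moment_bound (2 * m)"
    using integral_Vproc_moment(2,3)[of s "max s a" b m] ab st unfolding overlap_length_def by auto
  have "sigma_term \<phi> a b t \<omega> - sigma_term \<phi> a b s \<omega> = - \<phi> (b - s) * ?X \<omega>" if "\<omega> \<in> space M" for \<omega>
    using Iproc_diff_eq_integral[OF st(1) ab(2,3) that] ab st unfolding sigma_term_def by (simp add: Iproc_eq_0)
  moreover have "\<bar>- \<phi> (b - s)\<bar> \<le> K\<phi>"
    using K\<phi>[of "b - s"] ab st by simp
  ultimately have dom: "0 \<le> (sigma_term \<phi> a b t \<omega> - sigma_term \<phi> a b s \<omega>) ^ (2 * m)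
      \<and> (sigma_term \<phi> a b t \<omega> - sigma_term \<phi> a b s \<omega>) ^ (2 * m) \<le> K\<phi> ^ (2 * m) * ?X \<omega> ^ (2 * m)"
    if "\<omega> \<in> space M" for \<omega>
    using power_even_mult_le that by simp
  have "sigma_term \<phi> a b t \<in> borel_measurable M" "sigma_term \<phi> a b s \<in> borel_measurable M"
    using sigma_term_measurable ab st by auto
  then have meas: "(\<lambda>\<omega>. (sigma_term \<phi> a b t \<omega> - sigma_term \<phi> a b s \<omega>) ^ (2 * m)) \<in> borel_measurable M"
    by measurable
  have "(\<integral>\<omega>. K\<phi> ^ (2 * m) * ?X \<omega> ^ (2 * m) \<partial>M)
      \<le> K\<phi> ^ (2 * m) * V_moment_bound (2 * m) * overlap_length s t a b ^ (2 * m)"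
    using mult_left_mono[OF X(2) zero_le_even_power'[of K\<phi> m]] by (simp add: mult_ac)
  from integrable_integral_le_dominated[OF _ meas dom this]
  show "integrable M (\<lambda>\<omega>. (sigma_term \<phi> a b t \<omega> - sigma_term \<phi> a b s \<omega>) ^ (2 * m))"
    "(\<integral>\<omega>. (sigma_term \<phi> a b t \<omega> - sigma_term \<phi> a b s \<omega>) ^ (2 * m) \<partial>M)
      \<le> K\<phi> ^ (2 * m) * V_moment_bound (2 * m) * overlap_length s t a b ^ (2 * m)"
    using X(1) by auto
qed

lemma sigma_term_increment_moment:
  assumes ab: "0 \<le> a" "a \<le> b" "b \<le> 1" and st: "0 \<le> s" "s \<le> t" "t \<le> 1" and m: "1 \<le> m"
    and K\<phi>: "\<And>x. x \<in> {0..1} \<Longrightarrow> \<bar>\<phi> x\<bar> \<le> K\<phi>" and L\<phi>: "L\<phi>-lipschitz_on {0..1} \<phi>"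
  shows "integrable M (\<lambda>\<omega>. (sigma_term \<phi> a b t \<omega> - sigma_term \<phi> a b s \<omega>) ^ (2 * m))"
    "(\<integral>\<omega>. (sigma_term \<phi> a b t \<omega> - sigma_term \<phi> a b s \<omega>) ^ (2 * m) \<partial>M)
      \<le> sigma_term_bound m K\<phi> L\<phi> * ((b - a) ^ (2 * m) * (t - s) ^ m + overlap_length s t a b ^ (2 * m))"
proof -
  let ?G = "\<lambda>\<omega>. (sigma_term \<phi> a b t \<omega> - sigma_term \<phi> a b s \<omega>) ^ (2 * m)"
  let ?B = "sigma_term_bound m K\<phi> L\<phi> * ((b - a) ^ (2 * m) * (t - s) ^ m + overlap_length s t a b ^ (2 * m))"
  have KL: "0 \<le> K\<phi>" "0 \<le> L\<phi>"
    using K\<phi>[of 0] lipschitz_on_nonneg[OF L\<phi>] by auto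
  have B: "0 \<le> ?B" "overlap_length s t a b ^ (2 * m) \<le> (b - a) ^ (2 * m) * (t - s) ^ m + overlap_length s t a b ^ (2 * m)"
    using sigma_term_bound_nonneg[OF KL] overlap_length_nonneg[OF ab(2)] ab st by simp_all
  consider "b \<le> s" | "s < b" "b \<le> t" | "t < b"
    by linarith
  then have "integrable M ?G \<and> (\<integral>\<omega>. ?G \<omega> \<partial>M) \<le> ?B"
  proof cases
    case 1
    then have "?G = (\<lambda>_. 0)"
      using ab st m unfolding sigma_term_def by (simp add: Iproc_eq_0 power_0_left)
    then show ?thesis
      using B(1) by simp
  next
    case 2
    define X where "X = L\<phi> ^ (2 * m) * V_moment_bound (2 * m)
      + K\<phi> ^ (2 * m) * (V_increment_bound m + V_moment_bound (2 * m))"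
    have "0 \<le> L\<phi> ^ (2 * m) * V_moment_bound (2 * m)" "0 \<le> K\<phi> ^ (2 * m) * V_increment_bound m"
      using KL V_moment_bound_nonneg V_increment_bound_nonneg by simp_all
    moreover have "0 \<le> K\<phi> ^ (2 * m) * V_moment_bound (2 * m)"
      using V_moment_bound_nonneg by simp
    ultimately have KX: "K\<phi> ^ (2 * m) * V_moment_bound (2 * m) \<le> 1 * X" and X0: "0 \<le> X"
      unfolding X_def distrib_left by linarith+
    have "1 * X \<le> 3 ^ (2 * m) * X"
      by (rule mult_right_mono[OF one_le_power X0]) simp
    with KX have "K\<phi> ^ (2 * m) * V_moment_bound (2 * m) \<le> sigma_term_bound m K\<phi> L\<phi>"
      unfolding sigma_term_bound_def X_def by linarith
    then have "K\<phi> ^ (2 * m) * V_moment_bound (2 * m) * overlap_length s t a b ^ (2 * m) \<le> ?B"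
      using B(2) sigma_term_bound_nonneg[OF KL] overlap_length_nonneg[OF ab(2)]
      by (intro mult_mono) auto
    then show ?thesis
      using sigma_term_increment_moment_boundary[where \<phi> = \<phi>, OF ab st(1) 2 st(3) m K\<phi>] by auto
  next
    case 3
    then show ?thesis
      using sigma_term_increment_moment_interior[where \<phi> = \<phi>, OF ab st(1,2) 3 m K\<phi> L\<phi>] by auto
  qed
  then show "integrable M ?G" "(\<integral>\<omega>. ?G \<omega> \<partial>M) \<le> ?B"
    by auto
qed

lemma Iproc_increment_moment:
  assumes st: "0 \<le> s" "s \<le> t" "t \<le> 1" and T: "0 \<le> T" "T \<le> 1" and m: "1 \<le> m"
  shows "integrable M (\<lambda>\<omega>. (I t T \<omega> - I s T \<omega>) ^ (2 * m))"
    "(\<integral>\<omega>. (I t T \<omega> - I s T \<omega>) ^ (2 * m) \<partial>M) \<le> 2 * sigma_term_bound m 1 0 * (t - s) ^ m"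
proof -
  have I: "sigma_term (\<lambda>_. 1) 0 T \<tau> \<omega> = I \<tau> T \<omega>" if "0 \<le> \<tau>" for \<tau> \<omega>
    using that unfolding sigma_term_def by (simp add: Iproc_eq_0)
  note S = sigma_term_increment_moment[of 0 T s t m "\<lambda>_. 1" 1 0, OF _ T st m _ lipschitz_on_constant]
  have "T ^ (2 * m) * (t - s) ^ m + overlap_length s t 0 T ^ (2 * m) \<le> 1 * (t - s) ^ m + (t - s) ^ m"
  proof (intro add_mono mult_right_mono)
    have "overlap_length s t 0 T ^ (2 * m) \<le> (t - s) ^ (2 * m)"
      using overlap_length_nonneg[OF T(1)] overlap_length_le[OF st(2)] by (intro power_mono) auto
    also have "\<dots> \<le> (t - s) ^ m"
      using st by (intro power_decreasing) auto
    finally show "overlap_length s t 0 T ^ (2 * m) \<le> (t - s) ^ m" .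
  qed (use T st in \<open>auto intro: power_le_one\<close>)
  from mult_left_mono[OF this sigma_term_bound_nonneg[of 1 0 m]]
  have "sigma_term_bound m 1 0 * (T ^ (2 * m) * (t - s) ^ m + overlap_length s t 0 T ^ (2 * m))
      \<le> 2 * sigma_term_bound m 1 0 * (t - s) ^ m"
    by (simp add: algebra_simps)
  then show "integrable M (\<lambda>\<omega>. (I t T \<omega> - I s T \<omega>) ^ (2 * m))"
    "(\<integral>\<omega>. (I t T \<omega> - I s T \<omega>) ^ (2 * m) \<partial>M) \<le> 2 * sigma_term_bound m 1 0 * (t - s) ^ m"
    using S st by (simp_all add: I)
qed

lemma Iproc_increment_moment_abs:
  assumes "t \<in> {0..1}" "s \<in> {0..1}" "T \<in> {0..1}" "1 \<le> m"
  shows "integrable M (\<lambda>\<omega>. (I t T \<omega> - I s T \<omega>) ^ (2 * m))"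
    "(\<integral>\<omega>. (I t T \<omega> - I s T \<omega>) ^ (2 * m) \<partial>M) \<le> 2 * sigma_term_bound m 1 0 * \<bar>t - s\<bar> ^ m"
proof -
  let ?D = "\<lambda>\<omega>. (I t T \<omega> - I s T \<omega>) ^ (2 * m)"
  have swap: "?D = (\<lambda>\<omega>. (I s T \<omega> - I t T \<omega>) ^ (2 * m))"
    by (simp add: power_mult power2_commute)
  have "integrable M ?D \<and> (\<integral>\<omega>. ?D \<omega> \<partial>M) \<le> 2 * sigma_term_bound m 1 0 * \<bar>t - s\<bar> ^ m"
  proof (cases "s \<le> t")
    case True
    then show ?thesis
      using Iproc_increment_moment[of s t T m] assms by auto
  next
    case False
    then show ?thesis
      using Iproc_increment_moment[of t s T m] assms unfolding swap by auto
  qed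
  then show "integrable M ?D" "(\<integral>\<omega>. ?D \<omega> \<partial>M) \<le> 2 * sigma_term_bound m 1 0 * \<bar>t - s\<bar> ^ m"
    by auto
qed

theorem Iproc_increment_powr_bound:
  assumes p: "1 \<le> p"
  shows "\<exists>C. \<forall>t\<in>{0..1}. \<forall>s\<in>{0..1}. \<forall>T\<in>{0..1}.
    integrable M (\<lambda>\<omega>. \<bar>I t T \<omega> - I s T \<omega>\<bar> powr p)
    \<and> (\<integral>\<omega>. \<bar>I t T \<omega> - I s T \<omega>\<bar> powr p \<partial>M) \<le> C * \<bar>t - s\<bar> powr (p / 2)"
proof (intro exI ballI)
  define m where "m = nat \<lceil>p\<rceil>"
  have m: "1 \<le> m" "p \<le> real (2 * m)"
    unfolding m_def using p by linarith+
  let ?C = "2 * sigma_term_bound m 1 0"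
  fix t s T :: real
  assume tsT: "t \<in> {0..1}" "s \<in> {0..1}" "T \<in> {0..1}"
  let ?X = "\<lambda>\<omega>. I t T \<omega> - I s T \<omega>"
  note E = Iproc_increment_moment_abs[OF tsT m(1)]
  show "integrable M (\<lambda>\<omega>. \<bar>?X \<omega>\<bar> powr p) \<and> (\<integral>\<omega>. \<bar>?X \<omega>\<bar> powr p \<partial>M) \<le> (1 + ?C) * \<bar>t - s\<bar> powr (p / 2)"
  proof (cases "t = s")
    case False
    define c where "c = \<bar>t - s\<bar>"
    have c: "0 < c"
      unfolding c_def using False by simp
    let ?R = "\<lambda>\<omega>. c powr (p / 2) * (1 + ?X \<omega> ^ (2 * m) / c ^ m)"
    have Ri: "integrable M ?R"
      using E(1) by simp
    have "(\<lambda>\<omega>. I t T \<omega>) \<in> borel_measurable M" "(\<lambda>\<omega>. I s T \<omega>) \<in> borel_measurable M"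
      using Iproc_measurable tsT by auto
    then have meas: "(\<lambda>\<omega>. \<bar>?X \<omega>\<bar> powr p) \<in> borel_measurable M"
      by measurable
    have dom: "0 \<le> \<bar>?X \<omega>\<bar> powr p \<and> \<bar>?X \<omega>\<bar> powr p \<le> ?R \<omega>" for \<omega>
      using abs_powr_le_even_power[OF c p m(2)] by simp
    have "(\<integral>\<omega>. ?R \<omega> \<partial>M) = c powr (p / 2) * (1 + (\<integral>\<omega>. ?X \<omega> ^ (2 * m) \<partial>M) / c ^ m)"
      using E(1) by (simp add: prob_space)
    also have "\<dots> \<le> c powr (p / 2) * (1 + ?C * c ^ m / c ^ m)"
      using E(2) c unfolding c_def by (intro mult_left_mono add_left_mono divide_right_mono) auto
    also have "\<dots> = (1 + ?C) * \<bar>t - s\<bar> powr (p / 2)"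
      using c unfolding c_def by simp
    finally show ?thesis
      using integrable_integral_le_dominated[OF Ri meas dom] by auto
  qed simp
qed

definition sigma_sum :: "(real \<Rightarrow> real) \<Rightarrow> (nat \<Rightarrow> real) \<Rightarrow> nat \<Rightarrow> real \<Rightarrow> 'a \<Rightarrow> real" where
  "sigma_sum \<phi> Tg j \<tau> \<omega> = (\<Sum>l\<in>{1..j}. sigma_term \<phi> (Tg (l - 1)) (Tg l) \<tau> \<omega>)"

lemma sigma_sum_eq:
  "sigma_sum \<phi> Tg j \<tau> \<omega> = (\<Sum>l\<in>{1..j}. \<phi> (Tg l - \<tau>) * (I \<tau> (Tg l) \<omega> - I \<tau> (Tg (l - 1)) \<omega>))"
  unfolding sigma_sum_def sigma_term_def ..

lemma sigma_sum_increment_moment: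
  assumes g: "grid d Tg" and j: "j \<le> d" and st: "0 \<le> s" "s \<le> t" "t \<le> 1"
    and K\<phi>: "\<And>x. x \<in> {0..1} \<Longrightarrow> \<bar>\<phi> x\<bar> \<le> K\<phi>" and L\<phi>: "L\<phi>-lipschitz_on {0..1} \<phi>"
  shows "integrable M (\<lambda>\<omega>. (sigma_sum \<phi> Tg j t \<omega> - sigma_sum \<phi> Tg j s \<omega>)\<^sup>2)"
    "(\<integral>\<omega>. (sigma_sum \<phi> Tg j t \<omega> - sigma_sum \<phi> Tg j s \<omega>)\<^sup>2 \<partial>M) \<le> 4 * sigma_term_bound 1 K\<phi> L\<phi> * (t - s)"
proof (atomize (full), cases "s = t")
  case False
  let ?X = "\<lambda>l \<omega>. sigma_term \<phi> (Tg (l - 1)) (Tg l) t \<omega> - sigma_term \<phi> (Tg (l - 1)) (Tg l) s \<omega>"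
  let ?C = "sigma_term_bound 1 K\<phi> L\<phi>"
  define \<sigma> where "\<sigma> = sqrt (t - s)"
  have \<sigma>: "0 < \<sigma>" "\<sigma> \<le> 1" "\<sigma>\<^sup>2 = t - s"
    unfolding \<sigma>_def using st False by auto
  define w where "w l = (Tg l - Tg (l - 1)) * \<sigma> + overlap_length s t (Tg (l - 1)) (Tg l)" for l
  note w = grid_overlap_weights[OF g j \<sigma>, folded w_def]
  have C: "0 \<le> ?C"
    using sigma_term_bound_nonneg K\<phi>[of 0] lipschitz_on_nonneg[OF L\<phi>] by auto
  have X: "?X l \<in> borel_measurable M" "integrable M (\<lambda>\<omega>. (?X l \<omega>)\<^sup>2)"
    "(\<integral>\<omega>. (?X l \<omega>)\<^sup>2 \<partial>M) \<le> ?C * (w l)\<^sup>2" if "l \<in> {1..j}" for l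
  proof -
    note gl = grid_le[OF g that j]
    show "?X l \<in> borel_measurable M"
      using sigma_term_measurable[of t "Tg (l - 1)" "Tg l" \<phi>] sigma_term_measurable[of s "Tg (l - 1)" "Tg l" \<phi>]
        gl st by auto
    note S = sigma_term_increment_moment[where \<phi> = \<phi> and m = 1, OF gl(1) less_imp_le[OF gl(2)] gl(3)
        st order_refl K\<phi> L\<phi>]
    show "integrable M (\<lambda>\<omega>. (?X l \<omega>)\<^sup>2)"
      using S(1) by simp
    have "(\<integral>\<omega>. (?X l \<omega>)\<^sup>2 \<partial>M) \<le> ?C * ((Tg l - Tg (l - 1))\<^sup>2 * (t - s) + overlap_length s t (Tg (l - 1)) (Tg l) ^ 2)"
      using S(2) by simp
    also have "\<dots> \<le> ?C * (w l)\<^sup>2"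
      using w(2)[OF that] C by (rule mult_left_mono)
    finally show "(\<integral>\<omega>. (?X l \<omega>)\<^sup>2 \<partial>M) \<le> ?C * (w l)\<^sup>2" .
  qed
  note Q = sum_square_moment_le[of "{1..j}" w ?X ?C, OF _ w(1) X]
  have "0 \<le> (\<Sum>l\<in>{1..j}. w l)"
    using w(1) by (intro sum_nonneg) (simp add: less_imp_le)
  then have "?C * (\<Sum>l\<in>{1..j}. w l)\<^sup>2 \<le> ?C * (2 * \<sigma>)\<^sup>2"
    using w(3) C by (intro mult_left_mono power_mono) auto
  then show "integrable M (\<lambda>\<omega>. (sigma_sum \<phi> Tg j t \<omega> - sigma_sum \<phi> Tg j s \<omega>)\<^sup>2) \<and>
    (\<integral>\<omega>. (sigma_sum \<phi> Tg j t \<omega> - sigma_sum \<phi> Tg j s \<omega>)\<^sup>2 \<partial>M) \<le> 4 * ?C * (t - s)"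
    using Q unfolding sigma_sum_def sum_subtractf[symmetric] \<sigma>(3)[symmetric] by (simp add: power_mult_distrib)
qed simp

lemma sigma_sums_increment_moment:
  assumes g: "grid d Tg" and ts: "t \<in> {0..1}" "s \<in> {0..1}"
    and K\<phi>: "\<And>x. x \<in> {0..1} \<Longrightarrow> \<bar>\<phi> x\<bar> \<le> K\<phi>" and L\<phi>: "L\<phi>-lipschitz_on {0..1} \<phi>"
  shows "integrable M (\<lambda>\<omega>. \<Sum>j\<in>{1..d}. (sigma_sum \<phi> Tg j t \<omega> - sigma_sum \<phi> Tg j s \<omega>)\<^sup>2)"
    "(\<integral>\<omega>. (\<Sum>j\<in>{1..d}. (sigma_sum \<phi> Tg j t \<omega> - sigma_sum \<phi> Tg j s \<omega>)\<^sup>2) \<partial>M)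
      \<le> 4 * sigma_term_bound 1 K\<phi> L\<phi> * real d * \<bar>t - s\<bar>"
proof -
  let ?Q = "\<lambda>j \<omega>. (sigma_sum \<phi> Tg j t \<omega> - sigma_sum \<phi> Tg j s \<omega>)\<^sup>2"
  have swap: "?Q j = (\<lambda>\<omega>. (sigma_sum \<phi> Tg j s \<omega> - sigma_sum \<phi> Tg j t \<omega>)\<^sup>2)" for j
    by (simp add: power2_commute)
  have Q: "integrable M (?Q j)" "(\<integral>\<omega>. ?Q j \<omega> \<partial>M) \<le> 4 * sigma_term_bound 1 K\<phi> L\<phi> * \<bar>t - s\<bar>"
    if "j \<in> {1..d}" for j
  proof (atomize (full), cases "s \<le> t")
    case True
    then show "integrable M (?Q j) \<and> (\<integral>\<omega>. ?Q j \<omega> \<partial>M) \<le> 4 * sigma_term_bound 1 K\<phi> L\<phi> * \<bar>t - s\<bar>"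
      using sigma_sum_increment_moment[OF g _ _ True _ K\<phi> L\<phi>] that ts by auto
  next
    case False
    then show "integrable M (?Q j) \<and> (\<integral>\<omega>. ?Q j \<omega> \<partial>M) \<le> 4 * sigma_term_bound 1 K\<phi> L\<phi> * \<bar>t - s\<bar>"
      using sigma_sum_increment_moment[of d Tg j t s, OF g _ _ _ _ K\<phi> L\<phi>] that ts
      unfolding swap by auto
  qed
  show "integrable M (\<lambda>\<omega>. \<Sum>j\<in>{1..d}. ?Q j \<omega>)"
    by (rule Bochner_Integration.integrable_sum[OF Q(1)])
  have "(\<integral>\<omega>. (\<Sum>j\<in>{1..d}. ?Q j \<omega>) \<partial>M) = (\<Sum>j\<in>{1..d}. (\<integral>\<omega>. ?Q j \<omega> \<partial>M))"
    using Q(1) by (simp add: Bochner_Integration.integral_sum)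
  also have "\<dots> \<le> (\<Sum>j\<in>{1..d}. 4 * sigma_term_bound 1 K\<phi> L\<phi> * \<bar>t - s\<bar>)"
    using Q(2) by (rule sum_mono)
  finally show "(\<integral>\<omega>. (\<Sum>j\<in>{1..d}. ?Q j \<omega>) \<partial>M) \<le> 4 * sigma_term_bound 1 K\<phi> L\<phi> * real d * \<bar>t - s\<bar>"
    by (simp add: mult_ac)
qed

end

section \<open>Derivatives in the kernel parameter\<close>

lemma pdir_sum_mult_const:
  fixes f :: "'b \<Rightarrow> real^'q::finite \<Rightarrow> real"
  assumes "finite A"
    and diff: "\<And>l. l \<in> A \<Longrightarrow> D l \<noteq> 0 \<Longrightarrow> (\<lambda>h. f l (\<xi> + h *\<^sub>R axis \<alpha> 1)) differentiable (at 0)"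
  shows "pdir \<alpha> (\<lambda>x. \<Sum>l\<in>A. f l x * D l) \<xi> = (\<Sum>l\<in>A. pdir \<alpha> (f l) \<xi> * D l)"
proof -
  have "((\<lambda>h. f l (\<xi> + h *\<^sub>R axis \<alpha> 1) * D l) has_field_derivative pdir \<alpha> (f l) \<xi> * D l) (at 0)"
    if "l \<in> A" for l
  proof (cases "D l = 0")
    case False
    then have "((\<lambda>h. f l (\<xi> + h *\<^sub>R axis \<alpha> 1)) has_field_derivative pdir \<alpha> (f l) \<xi>) (at 0)"
      using diff[OF that] unfolding pdir_def by (simp add: DERIV_deriv_iff_real_differentiable)
    then show ?thesis
      by (rule DERIV_cmult_right)
  qed simp
  then have "((\<lambda>h. \<Sum>l\<in>A. f l (\<xi> + h *\<^sub>R axis \<alpha> 1) * D l) has_field_derivative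
      (\<Sum>l\<in>A. pdir \<alpha> (f l) \<xi> * D l)) (at 0)"
    by (rule DERIV_sum)
  then show ?thesis
    unfolding pdir_def by (rule DERIV_imp_deriv)
qed

lemma pdir_eventually_cong:
  assumes "\<forall>\<^sub>F h in nhds 0. f (\<xi> + h *\<^sub>R axis \<alpha> 1) = g (\<xi> + h *\<^sub>R axis \<alpha> 1)"
  shows "pdir \<alpha> f \<xi> = pdir \<alpha> g \<xi>"
  unfolding pdir_def using assms by (rule deriv_cong_ev) simp

lemma eventually_axis_shift_in_open:
  fixes \<xi> :: "real^'q::finite" and y :: real
  assumes "open U" "(\<xi>, y) \<in> U"
  shows "\<forall>\<^sub>F h in nhds 0. (\<xi> + h *\<^sub>R axis \<alpha> 1, y) \<in> U"
proof -
  obtain e where e: "e > 0" "ball (\<xi>, y) e \<subseteq> U"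
    using assms open_contains_ball by blast
  have "(\<xi> + h *\<^sub>R axis \<alpha> 1, y) \<in> U" if "dist h 0 < e" for h :: real
    using that e by (auto simp: dist_Pair_Pair dist_norm subset_iff)
  then show ?thesis
    unfolding eventually_nhds_metric using e(1) by blast
qed

lemma kext_sum_eq:
  assumes "\<And>l. l \<in> A \<Longrightarrow> D l \<noteq> 0 \<Longrightarrow> 0 \<le> \<tau> l"
  shows "(\<Sum>l\<in>A. kext g x (\<tau> l) * D l) = (\<Sum>l\<in>A. g x (\<tau> l) * D l)"
proof (rule sum.cong[OF refl])
  show "kext g x (\<tau> l) * D l = g x (\<tau> l) * D l" if "l \<in> A" for l
    using assms[OF that] unfolding kext_def by (cases "D l = 0") auto
qed

lemma pdir_kext_sum:
  fixes g :: "real^'q::finite \<Rightarrow> real \<Rightarrow> real"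
  assumes "finite A"
    and "\<And>l. l \<in> A \<Longrightarrow> D l \<noteq> 0 \<Longrightarrow> 0 \<le> \<tau> l \<and> (\<lambda>h. g (\<xi> + h *\<^sub>R axis \<alpha> 1) (\<tau> l)) differentiable (at 0)"
  shows "pdir \<alpha> (\<lambda>x. \<Sum>l\<in>A. kext g x (\<tau> l) * D l) \<xi> = (\<Sum>l\<in>A. pd_xi \<alpha> g \<xi> (\<tau> l) * D l)"
  using assms kext_sum_eq[of A D \<tau> g] pdir_sum_mult_const[of A D "\<lambda>l x. g x (\<tau> l)" \<xi> \<alpha>]
  unfolding pd_xi_def by simp

lemma pdir2_kext_sum:
  fixes g :: "real^'q::finite \<Rightarrow> real \<Rightarrow> real"
  assumes A: "finite A" and U: "open U"
    and D: "\<And>l. l \<in> A \<Longrightarrow> D l \<noteq> 0 \<Longrightarrow> 0 \<le> \<tau> l \<and> (\<xi>, \<tau> l) \<in> U"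
    and g: "\<And>x y \<gamma>. (x, y) \<in> U \<Longrightarrow> (\<lambda>h. g (x + h *\<^sub>R axis \<gamma> 1) y) differentiable (at 0)"
    and g': "\<And>x y \<gamma>. (x, y) \<in> U \<Longrightarrow> (\<lambda>h. pd_xi \<beta> g (x + h *\<^sub>R axis \<gamma> 1) y) differentiable (at 0)"
  shows "pdir \<alpha> (pdir \<beta> (\<lambda>x. \<Sum>l\<in>A. kext g x (\<tau> l) * D l)) \<xi> = (\<Sum>l\<in>A. pd_xi \<alpha> (pd_xi \<beta> g) \<xi> (\<tau> l) * D l)"
proof -
  let ?A = "{l \<in> A. D l \<noteq> 0}"
  have "\<forall>\<^sub>F h in nhds 0. \<forall>l\<in>?A. (\<xi> + h *\<^sub>R axis \<alpha> 1, \<tau> l) \<in> U"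
    using A D by (intro eventually_ball_finite ballI eventually_axis_shift_in_open[OF U]) auto
  then have "\<forall>\<^sub>F h in nhds 0. pdir \<beta> (\<lambda>x. \<Sum>l\<in>A. kext g x (\<tau> l) * D l) (\<xi> + h *\<^sub>R axis \<alpha> 1)
      = (\<Sum>l\<in>A. kext (pd_xi \<beta> g) (\<xi> + h *\<^sub>R axis \<alpha> 1) (\<tau> l) * D l)"
  proof (rule eventually_mono)
    fix h
    assume h: "\<forall>l\<in>?A. (\<xi> + h *\<^sub>R axis \<alpha> 1, \<tau> l) \<in> U"
    have "pdir \<beta> (\<lambda>x. \<Sum>l\<in>A. kext g x (\<tau> l) * D l) (\<xi> + h *\<^sub>R axis \<alpha> 1)
        = (\<Sum>l\<in>A. pd_xi \<beta> g (\<xi> + h *\<^sub>R axis \<alpha> 1) (\<tau> l) * D l)"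
      using A D h g by (intro pdir_kext_sum) auto
    also have "\<dots> = (\<Sum>l\<in>A. kext (pd_xi \<beta> g) (\<xi> + h *\<^sub>R axis \<alpha> 1) (\<tau> l) * D l)"
      using D by (intro kext_sum_eq[symmetric]) auto
    finally show "pdir \<beta> (\<lambda>x. \<Sum>l\<in>A. kext g x (\<tau> l) * D l) (\<xi> + h *\<^sub>R axis \<alpha> 1)
        = (\<Sum>l\<in>A. kext (pd_xi \<beta> g) (\<xi> + h *\<^sub>R axis \<alpha> 1) (\<tau> l) * D l)" .
  qed
  then have "pdir \<alpha> (pdir \<beta> (\<lambda>x. \<Sum>l\<in>A. kext g x (\<tau> l) * D l)) \<xi>
      = pdir \<alpha> (\<lambda>x. \<Sum>l\<in>A. kext (pd_xi \<beta> g) x (\<tau> l) * D l) \<xi>"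
    by (rule pdir_eventually_cong)
  also have "\<dots> = (\<Sum>l\<in>A. pd_xi \<alpha> (pd_xi \<beta> g) \<xi> (\<tau> l) * D l)"
    using A D g' by (intro pdir_kext_sum) auto
  finally show ?thesis .
qed

lemma compact_C1_bounded_lipschitz:
  fixes g :: "real^'q::finite \<Rightarrow> real \<Rightarrow> real"
  assumes \<Theta>: "compact \<Theta>" and U: "\<Theta> \<times> {0..1} \<subseteq> U"
    and g: "continuous_on U (\<lambda>(\<xi>, t). g \<xi> t)" and g': "continuous_on U (\<lambda>(\<xi>, t). pd_t g \<xi> t)"
    and diff: "\<forall>(\<xi>, t)\<in>U. g \<xi> differentiable (at t)"
  shows "\<exists>c\<ge>0. \<forall>\<xi>\<in>\<Theta>. (\<forall>x\<in>{0..1}. \<bar>g \<xi> x\<bar> \<le> c) \<and> c-lipschitz_on {0..1} (g \<xi>)"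
proof -
  have S: "compact (\<Theta> \<times> {0..1::real})"
    using \<Theta> by (intro compact_Times) auto
  obtain B1 where B1: "\<And>p. p \<in> \<Theta> \<times> {0..1} \<Longrightarrow> norm ((\<lambda>(\<xi>, t). g \<xi> t) p) \<le> B1"
    using compact_imp_bounded[OF compact_continuous_image[OF continuous_on_subset[OF g U] S]]
    unfolding bounded_iff by auto
  obtain B2 where B2: "\<And>p. p \<in> \<Theta> \<times> {0..1} \<Longrightarrow> norm ((\<lambda>(\<xi>, t). pd_t g \<xi> t) p) \<le> B2"
    using compact_imp_bounded[OF compact_continuous_image[OF continuous_on_subset[OF g' U] S]]
    unfolding bounded_iff by auto
  define c where "c = max 0 (max B1 B2)"
  have "\<bar>g \<xi> x\<bar> \<le> c" if "\<xi> \<in> \<Theta>" "x \<in> {0..1}" for \<xi> x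
    using B1[of "(\<xi>, x)"] that unfolding c_def by auto
  moreover have "c-lipschitz_on {0..1} (g \<xi>)" if \<xi>: "\<xi> \<in> \<Theta>" for \<xi>
  proof (rule bounded_derivative_imp_lipschitz)
    show "(g \<xi> has_derivative (*) (pd_t g \<xi> x)) (at x within {0..1})" if "x \<in> {0..1}" for x
    proof -
      have "g \<xi> differentiable (at x)"
        using diff U \<xi> that by blast
      then have "(g \<xi> has_field_derivative pd_t g \<xi> x) (at x)"
        unfolding pd_t_def by (simp only: DERIV_deriv_iff_real_differentiable)
      then show ?thesis
        unfolding has_field_derivative_def by (rule has_derivative_at_withinI)
    qed
    show "onorm ((*) (pd_t g \<xi> x)) \<le> c" if "x \<in> {0..1}" for x
    proof (rule onorm_le)
      have "\<bar>pd_t g \<xi> x\<bar> \<le> c"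
        using B2[of "(\<xi>, x)"] \<xi> that unfolding c_def by auto
      then show "norm (pd_t g \<xi> x * y) \<le> c * norm y" for y
        by (simp add: abs_mult mult_right_mono)
    qed
  qed (auto simp: c_def)
  moreover have "0 \<le> c"
    unfolding c_def by simp
  ultimately show ?thesis
    by blast
qed

lemma finite_uniform_bound:
  fixes P :: "'b \<Rightarrow> real \<Rightarrow> bool"
  assumes "finite A" "\<And>x. x \<in> A \<Longrightarrow> \<exists>c. P x c" "\<And>x c c'. x \<in> A \<Longrightarrow> P x c \<Longrightarrow> c \<le> c' \<Longrightarrow> P x c'"
  shows "\<exists>c. \<forall>x\<in>A. P x c"
proof -
  obtain f where f: "\<And>x. x \<in> A \<Longrightarrow> P x (f x)"
    using assms(2) by metis
  have "P x (Max (insert 0 (f ` A)))" if "x \<in> A" for x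
  proof (rule assms(3)[OF that f[OF that]])
    show "f x \<le> Max (insert 0 (f ` A))"
      using assms(1) that by (intro Max_ge) auto
  qed
  then show ?thesis
    by blast
qed

definition kernel_derivatives :: "(real^'q::finite \<Rightarrow> real \<Rightarrow> real) \<Rightarrow> (real^'q \<Rightarrow> real \<Rightarrow> real) set" where
  "kernel_derivatives k = insert k (range (\<lambda>\<alpha>. pd_xi \<alpha> k) \<union> range (\<lambda>(\<alpha>, \<beta>). pd_xi \<alpha> (pd_xi \<beta> k)))"

lemma H1_uniform_bounds:
  assumes \<Theta>: "compact \<Theta>" and hyp: "H1 \<Theta> k"
  shows "\<exists>c\<ge>0. \<forall>g\<in>kernel_derivatives k. \<forall>\<xi>\<in>\<Theta>. (\<forall>x\<in>{0..1}. \<bar>g \<xi> x\<bar> \<le> c) \<and> c-lipschitz_on {0..1} (g \<xi>)"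
proof -
  from hyp obtain U where U: "\<Theta> \<times> {0..1} \<subseteq> U" and C22: "C22_on U k"
    unfolding H1_def by blast
  have "kernel_derivatives k \<subseteq> {k} \<union> {pd_xi \<alpha> k |\<alpha>. True} \<union> {pd_xi \<beta> (pd_xi \<alpha> k) |\<alpha> \<beta>. True}"
    unfolding kernel_derivatives_def by auto
  then have "\<exists>c\<ge>0. \<forall>\<xi>\<in>\<Theta>. (\<forall>x\<in>{0..1}. \<bar>g \<xi> x\<bar> \<le> c) \<and> c-lipschitz_on {0..1} (g \<xi>)"
    if "g \<in> kernel_derivatives k" for g
    using C22 that unfolding C22_on_def by (intro compact_C1_bounded_lipschitz[OF \<Theta> U]) blast+
  moreover have "finite (kernel_derivatives k)"
    unfolding kernel_derivatives_def by simp
  moreover have "0 \<le> c' \<and> (\<forall>\<xi>\<in>\<Theta>. (\<forall>x\<in>{0..1}. \<bar>g \<xi> x\<bar> \<le> c') \<and> c'-lipschitz_on {0..1} (g \<xi>))"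
    if "0 \<le> c \<and> (\<forall>\<xi>\<in>\<Theta>. (\<forall>x\<in>{0..1}. \<bar>g \<xi> x\<bar> \<le> c) \<and> c-lipschitz_on {0..1} (g \<xi>))" "c \<le> c'"
    for g c c'
    using that lipschitz_on_le[of c "{0..1}" _ c'] by force
  ultimately obtain c where
    "\<forall>g\<in>kernel_derivatives k. 0 \<le> c \<and> (\<forall>\<xi>\<in>\<Theta>. (\<forall>x\<in>{0..1}. \<bar>g \<xi> x\<bar> \<le> c) \<and> c-lipschitz_on {0..1} (g \<xi>))"
    using finite_uniform_bound[of "kernel_derivatives k"
        "\<lambda>g c. 0 \<le> c \<and> (\<forall>\<xi>\<in>\<Theta>. (\<forall>x\<in>{0..1}. \<bar>g \<xi> x\<bar> \<le> c) \<and> c-lipschitz_on {0..1} (g \<xi>))"]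
    by blast
  moreover have "k \<in> kernel_derivatives k"
    unfolding kernel_derivatives_def by simp
  ultimately show ?thesis
    by blast
qed

lemma Iproc_grid_diff_nonzero:
  assumes g: "grid d Tg" and l: "l \<in> {1..j}" and j: "j \<le> d"
    and D: "Iproc k \<theta> V0 W \<tau> (Tg l) \<omega> - Iproc k \<theta> V0 W \<tau> (Tg (l - 1)) \<omega> \<noteq> 0"
  shows "\<tau> < Tg l"
proof (rule ccontr)
  assume "\<not> \<tau> < Tg l"
  then show False
    using D grid_le[OF g l j] unfolding Iproc_def by auto
qed

lemma sigma_hat_pdir_eq:
  fixes k :: "real^'q::finite \<Rightarrow> real \<Rightarrow> real" and \<theta> :: "real^'q" and V0 :: "real \<Rightarrow> real"
    and W :: "real \<Rightarrow> 'a \<Rightarrow> real" and \<omega> :: 'a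
  assumes hyp: "H1 \<Theta> k" and g: "grid d Tg" and j: "j \<le> d" and \<xi>: "\<xi> \<in> \<Theta>" and \<tau>: "0 \<le> \<tau>"
  defines "D \<equiv> \<lambda>l. Iproc k \<theta> V0 W \<tau> (Tg l) \<omega> - Iproc k \<theta> V0 W \<tau> (Tg (l - 1)) \<omega>"
  shows "sigma_hat k \<theta> V0 W Tg j \<xi> \<tau> \<omega> = (\<Sum>l\<in>{1..j}. k \<xi> (Tg l - \<tau>) * D l)"
    "pdir \<alpha> (\<lambda>x. sigma_hat k \<theta> V0 W Tg j x \<tau> \<omega>) \<xi> = (\<Sum>l\<in>{1..j}. pd_xi \<alpha> k \<xi> (Tg l - \<tau>) * D l)"
    "pdir \<alpha> (pdir \<beta> (\<lambda>x. sigma_hat k \<theta> V0 W Tg j x \<tau> \<omega>)) \<xi>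
      = (\<Sum>l\<in>{1..j}. pd_xi \<alpha> (pd_xi \<beta> k) \<xi> (Tg l - \<tau>) * D l)"
proof -
  from hyp obtain U where U: "open U" "\<Theta> \<times> {0..1} \<subseteq> U" and C22: "C22_on U k"
    unfolding H1_def by blast
  have sigma: "(\<lambda>x. sigma_hat k \<theta> V0 W Tg j x \<tau> \<omega>) = (\<lambda>x. \<Sum>l\<in>{1..j}. kext k x (Tg l - \<tau>) * D l)"
    unfolding sigma_hat_def D_def ..
  have DU: "0 \<le> Tg l - \<tau> \<and> (\<xi>, Tg l - \<tau>) \<in> U" if "l \<in> {1..j}" "D l \<noteq> 0" for l
  proof -
    have "\<tau> < Tg l"
      by (rule Iproc_grid_diff_nonzero[OF g that(1) j]) (use that(2) in \<open>simp add: D_def\<close>)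
    then show ?thesis
      using grid_le[OF g that(1) j] \<xi> \<tau> by (intro conjI subsetD[OF U(2)]) auto
  qed
  have dk: "(\<lambda>h. k (x + h *\<^sub>R axis \<gamma> 1) y) differentiable (at 0)"
    and dk': "(\<lambda>h. pd_xi \<beta> k (x + h *\<^sub>R axis \<gamma> 1) y) differentiable (at 0)" if "(x, y) \<in> U" for x y \<gamma>
    using C22 that unfolding C22_on_def by blast+
  show "sigma_hat k \<theta> V0 W Tg j \<xi> \<tau> \<omega> = (\<Sum>l\<in>{1..j}. k \<xi> (Tg l - \<tau>) * D l)"
    using fun_cong[OF sigma, of \<xi>] kext_sum_eq[of "{1..j}" D "\<lambda>l. Tg l - \<tau>" k \<xi>] DU by simp
  show "pdir \<alpha> (\<lambda>x. sigma_hat k \<theta> V0 W Tg j x \<tau> \<omega>) \<xi> = (\<Sum>l\<in>{1..j}. pd_xi \<alpha> k \<xi> (Tg l - \<tau>) * D l)"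
    unfolding sigma using DU dk by (intro pdir_kext_sum) auto
  show "pdir \<alpha> (pdir \<beta> (\<lambda>x. sigma_hat k \<theta> V0 W Tg j x \<tau> \<omega>)) \<xi>
      = (\<Sum>l\<in>{1..j}. pd_xi \<alpha> (pd_xi \<beta> k) \<xi> (Tg l - \<tau>) * D l)"
    unfolding sigma using DU dk dk' by (intro pdir2_kext_sum[OF _ U(1)]) auto
qed

lemma forward_variance_of_H1:
  assumes BM: "std_BM M F W" and \<theta>: "\<theta> \<in> \<Theta>"
    and V0: "continuous_on {0..1} V0" "\<forall>u\<in>{0..1}. V0 u > 0"
    and hyp: "H1 \<Theta> k" and K: "\<And>x. x \<in> {0..1} \<Longrightarrow> \<bar>k \<theta> x\<bar> \<le> K"
  shows "\<exists>Vmax. forward_variance M F W k \<theta> V0 (pd_t k \<theta>) K Vmax"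
proof -
  from hyp obtain U where U: "\<Theta> \<times> {0..1} \<subseteq> U" and C22: "C22_on U k"
    unfolding H1_def by blast
  have diff: "\<forall>(\<xi>, t)\<in>U. k \<xi> differentiable (at t)" and cont: "continuous_on U (\<lambda>(\<xi>, t). pd_t k \<xi> t)"
    using C22 unfolding C22_on_def by blast+
  have \<theta>U: "(\<theta>, x) \<in> U" if "x \<in> {0..1}" for x
    using U \<theta> that by auto
  obtain Vmax where "\<forall>x\<in>V0 ` {0..1}. norm x \<le> Vmax"
    using compact_imp_bounded[OF compact_continuous_image[OF V0(1) compact_Icc]]
    unfolding bounded_iff by blast
  then have Vmax: "V0 u \<le> Vmax" if "u \<in> {0..1}" for u
    using that by (metis abs_ge_self image_eqI order_trans real_norm_def)
  have "forward_variance M F W k \<theta> V0 (pd_t k \<theta>) K Vmax"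
  proof unfold_locales
    show "(k \<theta> has_real_derivative pd_t k \<theta> x) (at x)" if "x \<in> {0..1}" for x
      using diff \<theta>U[OF that] unfolding pd_t_def by (auto simp: DERIV_deriv_iff_real_differentiable)
    have "continuous_on {0..1} (\<lambda>x. (\<lambda>(\<xi>, t). pd_t k \<xi> t) (\<theta>, x))"
      by (rule continuous_on_compose2[OF cont]) (use \<theta>U in \<open>auto intro!: continuous_intros\<close>)
    then show "continuous_on {0..1} (pd_t k \<theta>)"
      by simp
  qed (use BM V0 Vmax K in auto)
  then show ?thesis ..
qed

lemma sigma_hat_increment_bound:
  fixes k :: "real^'q::finite \<Rightarrow> real \<Rightarrow> real"
  assumes FV: "forward_variance M F W k \<theta> V0 k' K Vmax" and hyp: "H1 \<Theta> k"
    and K: "\<forall>g\<in>kernel_derivatives k. \<forall>\<xi>\<in>\<Theta>. (\<forall>x\<in>{0..1}. \<bar>g \<xi> x\<bar> \<le> K) \<and> K-lipschitz_on {0..1} (g \<xi>)"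
  shows "\<exists>C. \<forall>d Tg. grid d Tg \<longrightarrow> (\<forall>\<xi>\<in>\<Theta>. \<forall>t\<in>{0..1}. \<forall>s\<in>{0..1}. \<forall>\<alpha> \<beta>.
      let \<sigma> = (\<lambda>j x t \<omega>. sigma_hat k \<theta> V0 W Tg j x t \<omega>) in
      integrable M (\<lambda>\<omega>. \<Sum>j\<in>{1..d}. (\<sigma> j \<xi> t \<omega> - \<sigma> j \<xi> s \<omega>)\<^sup>2)
    \<and> (\<integral>\<omega>. (\<Sum>j\<in>{1..d}. (\<sigma> j \<xi> t \<omega> - \<sigma> j \<xi> s \<omega>)\<^sup>2) \<partial>M) \<le> C * real d * \<bar>t - s\<bar>
    \<and> integrable M (\<lambda>\<omega>. \<Sum>j\<in>{1..d}.
          (pdir \<alpha> (\<lambda>x. \<sigma> j x t \<omega>) \<xi> - pdir \<alpha> (\<lambda>x. \<sigma> j x s \<omega>) \<xi>)\<^sup>2)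
    \<and> (\<integral>\<omega>. (\<Sum>j\<in>{1..d}.
          (pdir \<alpha> (\<lambda>x. \<sigma> j x t \<omega>) \<xi> - pdir \<alpha> (\<lambda>x. \<sigma> j x s \<omega>) \<xi>)\<^sup>2) \<partial>M)
        \<le> C * real d * \<bar>t - s\<bar>
    \<and> integrable M (\<lambda>\<omega>. \<Sum>j\<in>{1..d}.
          (pdir \<alpha> (pdir \<beta> (\<lambda>x. \<sigma> j x t \<omega>)) \<xi> - pdir \<alpha> (pdir \<beta> (\<lambda>x. \<sigma> j x s \<omega>)) \<xi>)\<^sup>2)
    \<and> (\<integral>\<omega>. (\<Sum>j\<in>{1..d}.
          (pdir \<alpha> (pdir \<beta> (\<lambda>x. \<sigma> j x t \<omega>)) \<xi> - pdir \<alpha> (pdir \<beta> (\<lambda>x. \<sigma> j x s \<omega>)) \<xi>)\<^sup>2) \<partial>M)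
        \<le> C * real d * \<bar>t - s\<bar>)"
proof -
  interpret forward_variance M F W k \<theta> V0 k' K Vmax
    by (rule FV)
  have kd: "k \<in> kernel_derivatives k" "pd_xi \<alpha> k \<in> kernel_derivatives k"
    "pd_xi \<alpha> (pd_xi \<beta> k) \<in> kernel_derivatives k" for \<alpha> \<beta>
    unfolding kernel_derivatives_def by auto
  have sums: "integrable M (\<lambda>\<omega>. \<Sum>j\<in>{1..d}. (sigma_sum (g \<xi>) Tg j t \<omega> - sigma_sum (g \<xi>) Tg j s \<omega>)\<^sup>2)
      \<and> (\<integral>\<omega>. (\<Sum>j\<in>{1..d}. (sigma_sum (g \<xi>) Tg j t \<omega> - sigma_sum (g \<xi>) Tg j s \<omega>)\<^sup>2) \<partial>M)
        \<le> 4 * sigma_term_bound 1 K K * real d * \<bar>t - s\<bar>"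
    if "g \<in> kernel_derivatives k" "\<xi> \<in> \<Theta>" "grid d Tg" "t \<in> {0..1}" "s \<in> {0..1}" for g \<xi> d Tg t s
    using sigma_sums_increment_moment[OF that(3-5), of "g \<xi>" K K] K that(1,2) by auto
  show ?thesis
  proof (intro exI[of _ "4 * sigma_term_bound 1 K K"] allI impI ballI)
    fix d :: nat and Tg :: "nat \<Rightarrow> real" and \<xi> :: "real^'q" and t s :: real and \<alpha> \<beta> :: 'q
    assume g: "grid d Tg" and \<xi>: "\<xi> \<in> \<Theta>" and t: "t \<in> {0..1}" and s: "s \<in> {0..1}"
    note eq = sigma_hat_pdir_eq[where \<theta> = \<theta> and ?V0.0 = V0 and W = W, OF hyp g _ \<xi>, folded sigma_sum_eq]
    have "(\<Sum>j\<in>{1..d}. (sigma_hat k \<theta> V0 W Tg j \<xi> t \<omega> - sigma_hat k \<theta> V0 W Tg j \<xi> s \<omega>)\<^sup>2)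
        = (\<Sum>j\<in>{1..d}. (sigma_sum (k \<xi>) Tg j t \<omega> - sigma_sum (k \<xi>) Tg j s \<omega>)\<^sup>2)"
      "(\<Sum>j\<in>{1..d}. (pdir \<alpha> (\<lambda>x. sigma_hat k \<theta> V0 W Tg j x t \<omega>) \<xi>
          - pdir \<alpha> (\<lambda>x. sigma_hat k \<theta> V0 W Tg j x s \<omega>) \<xi>)\<^sup>2)
        = (\<Sum>j\<in>{1..d}. (sigma_sum (pd_xi \<alpha> k \<xi>) Tg j t \<omega> - sigma_sum (pd_xi \<alpha> k \<xi>) Tg j s \<omega>)\<^sup>2)"
      "(\<Sum>j\<in>{1..d}. (pdir \<alpha> (pdir \<beta> (\<lambda>x. sigma_hat k \<theta> V0 W Tg j x t \<omega>)) \<xi>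
          - pdir \<alpha> (pdir \<beta> (\<lambda>x. sigma_hat k \<theta> V0 W Tg j x s \<omega>)) \<xi>)\<^sup>2)
        = (\<Sum>j\<in>{1..d}. (sigma_sum (pd_xi \<alpha> (pd_xi \<beta> k) \<xi>) Tg j t \<omega>
          - sigma_sum (pd_xi \<alpha> (pd_xi \<beta> k) \<xi>) Tg j s \<omega>)\<^sup>2)" for \<omega>
      using eq t s by (auto intro!: sum.cong)
    then show "let \<sigma> = (\<lambda>j x t \<omega>. sigma_hat k \<theta> V0 W Tg j x t \<omega>) in
        integrable M (\<lambda>\<omega>. \<Sum>j\<in>{1..d}. (\<sigma> j \<xi> t \<omega> - \<sigma> j \<xi> s \<omega>)\<^sup>2)
      \<and> (\<integral>\<omega>. (\<Sum>j\<in>{1..d}. (\<sigma> j \<xi> t \<omega> - \<sigma> j \<xi> s \<omega>)\<^sup>2) \<partial>M) \<le> 4 * sigma_term_bound 1 K K * real d * \<bar>t - s\<bar>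
      \<and> integrable M (\<lambda>\<omega>. \<Sum>j\<in>{1..d}.
            (pdir \<alpha> (\<lambda>x. \<sigma> j x t \<omega>) \<xi> - pdir \<alpha> (\<lambda>x. \<sigma> j x s \<omega>) \<xi>)\<^sup>2)
      \<and> (\<integral>\<omega>. (\<Sum>j\<in>{1..d}.
            (pdir \<alpha> (\<lambda>x. \<sigma> j x t \<omega>) \<xi> - pdir \<alpha> (\<lambda>x. \<sigma> j x s \<omega>) \<xi>)\<^sup>2) \<partial>M)
          \<le> 4 * sigma_term_bound 1 K K * real d * \<bar>t - s\<bar>
      \<and> integrable M (\<lambda>\<omega>. \<Sum>j\<in>{1..d}.
            (pdir \<alpha> (pdir \<beta> (\<lambda>x. \<sigma> j x t \<omega>)) \<xi> - pdir \<alpha> (pdir \<beta> (\<lambda>x. \<sigma> j x s \<omega>)) \<xi>)\<^sup>2)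
      \<and> (\<integral>\<omega>. (\<Sum>j\<in>{1..d}.
            (pdir \<alpha> (pdir \<beta> (\<lambda>x. \<sigma> j x t \<omega>)) \<xi> - pdir \<alpha> (pdir \<beta> (\<lambda>x. \<sigma> j x s \<omega>)) \<xi>)\<^sup>2) \<partial>M)
          \<le> 4 * sigma_term_bound 1 K K * real d * \<bar>t - s\<bar>"
      using sums[OF kd(1) \<xi> g t s] sums[OF kd(2) \<xi> g t s] sums[OF kd(3) \<xi> g t s]
      unfolding Let_def by presburger
  qed
qed

theorem mainTheorem3:
  fixes M :: "'a measure" and F :: "real \<Rightarrow> 'a measure" and W :: "real \<Rightarrow> 'a \<Rightarrow> real"
    and \<Theta> :: "(real^'q::finite) set" and k :: "real^'q \<Rightarrow> real \<Rightarrow> real"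
    and \<theta> :: "real^'q" and V0 :: "real \<Rightarrow> real"
  assumes BM: "std_BM M F W"
    and Theta: "compact \<Theta>" "convex \<Theta>" "\<theta> \<in> \<Theta>"
    and V0: "continuous_on {0..1} V0" "\<forall>u\<in>{0..1}. V0 u > 0"
    and hyp: "H1 \<Theta> k"
  shows
    "(\<forall>p::real. p \<ge> 1 \<longrightarrow> (\<exists>C. \<forall>t\<in>{0..1}. \<forall>s\<in>{0..1}. \<forall>T\<in>{0..1}.
        integrable M (\<lambda>\<omega>. \<bar>Iproc k \<theta> V0 W t T \<omega> - Iproc k \<theta> V0 W s T \<omega>\<bar> powr p)
      \<and> (\<integral>\<omega>. \<bar>Iproc k \<theta> V0 W t T \<omega> - Iproc k \<theta> V0 W s T \<omega>\<bar> powr p \<partial>M)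
          \<le> C * \<bar>t - s\<bar> powr (p / 2)))
   \<and> (\<exists>C. \<forall>d Tg. grid d Tg \<longrightarrow> (\<forall>\<xi>\<in>\<Theta>. \<forall>t\<in>{0..1}. \<forall>s\<in>{0..1}. \<forall>\<alpha> \<beta>.
        let \<sigma> = (\<lambda>j x t \<omega>. sigma_hat k \<theta> V0 W Tg j x t \<omega>) in
        integrable M (\<lambda>\<omega>. \<Sum>j\<in>{1..d}. (\<sigma> j \<xi> t \<omega> - \<sigma> j \<xi> s \<omega>)\<^sup>2)
      \<and> (\<integral>\<omega>. (\<Sum>j\<in>{1..d}. (\<sigma> j \<xi> t \<omega> - \<sigma> j \<xi> s \<omega>)\<^sup>2) \<partial>M) \<le> C * real d * \<bar>t - s\<bar>
      \<and> integrable M (\<lambda>\<omega>. \<Sum>j\<in>{1..d}.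
            (pdir \<alpha> (\<lambda>x. \<sigma> j x t \<omega>) \<xi> - pdir \<alpha> (\<lambda>x. \<sigma> j x s \<omega>) \<xi>)\<^sup>2)
      \<and> (\<integral>\<omega>. (\<Sum>j\<in>{1..d}.
            (pdir \<alpha> (\<lambda>x. \<sigma> j x t \<omega>) \<xi> - pdir \<alpha> (\<lambda>x. \<sigma> j x s \<omega>) \<xi>)\<^sup>2) \<partial>M)
          \<le> C * real d * \<bar>t - s\<bar>
      \<and> integrable M (\<lambda>\<omega>. \<Sum>j\<in>{1..d}.
            (pdir \<alpha> (pdir \<beta> (\<lambda>x. \<sigma> j x t \<omega>)) \<xi> - pdir \<alpha> (pdir \<beta> (\<lambda>x. \<sigma> j x s \<omega>)) \<xi>)\<^sup>2)
      \<and> (\<integral>\<omega>. (\<Sum>j\<in>{1..d}.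
            (pdir \<alpha> (pdir \<beta> (\<lambda>x. \<sigma> j x t \<omega>)) \<xi> - pdir \<alpha> (pdir \<beta> (\<lambda>x. \<sigma> j x s \<omega>)) \<xi>)\<^sup>2) \<partial>M)
          \<le> C * real d * \<bar>t - s\<bar>))"
proof -
  obtain c where c: "\<forall>g\<in>kernel_derivatives k. \<forall>\<xi>\<in>\<Theta>.
      (\<forall>x\<in>{0..1}. \<bar>g \<xi> x\<bar> \<le> c) \<and> c-lipschitz_on {0..1} (g \<xi>)"
    using H1_uniform_bounds[OF Theta(1) hyp] by blast
  moreover have "k \<in> kernel_derivatives k"
    unfolding kernel_derivatives_def by simp
  ultimately obtain Vmax where FV: "forward_variance M F W k \<theta> V0 (pd_t k \<theta>) c Vmax"
    using forward_variance_of_H1[OF BM Theta(3) V0 hyp] Theta(3) by blast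
  show ?thesis
    using forward_variance.Iproc_increment_powr_bound[OF FV] sigma_hat_increment_bound[OF FV hyp c] by blast
qed

end
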